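(* Let $m\ge1$, $x_0\in S^m_1$, and let $u\colon[0,\tau]\to\mathbb R^{m+1}_1$ be absolutely continuous with $\langle u(t),x_0\rangle_J=0$ for all $t$. Let $(s,R)\colon[0,\tau]\to\mathbb R^{m+1}\times GL(m+1)$ be the absolutely continuous solution of $$\dot s(t)=u(t),\qquad \dot R(t)=R(t)\big(u(t)x_0^{\mathbf t}-x_0u(t)^{\mathbf t}\big)J,\qquad s(0)=0,\ R(0)=I_{m+1}.$$ Then $R(t)\in O^{++}_1(m+1)$ for all $t$, and with $x(t)=R(t)x_0$ and $g(t)=(s(t),R(t)^{-1})$, the curve $(x,g)$ is a $G$-rolling of $M=S^m_1$ on $\widehat M=T^{\mathrm{aff}}_{x_0}S^m_1$ without slipping or twisting (for any of the three choices of $G_1(m+1)$), with development $\widehat x(t)=s(t)+x_0$.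
   Context: $\mathbb R^{m+1}_1$ is $\mathbb R^{m+1}$ with $\langle x,y\rangle_J=x^{\mathbf t}Jy$, $J=\mathrm{diag}(-1,I_m)$. The Lorentzian sphere is $S^m_1=\{x\in\mathbb R^{m+1}_1:\langle x,x\rangle_J=1\}$; $T_{x_0}S^m_1=\{v:\langle v,x_0\rangle_J=0\}$ and $T^{\mathrm{aff}}_{x_0}S^m_1=x_0+T_{x_0}S^m_1$ (the affine tangent space, a pseudo-Riemannian submanifold of the same dimension and index). $O_1(m+1)=\{X:X^{\mathbf t}JX=J\}$; writing $X$ in blocks with upper-left $1\times1$ block $X_T$ and lower-right $m\times m$ block $X_S$, $O^{++}_1(m+1)$ is the set with $X_T>0$ and $\det X_S>0$. $G_1(m+1)$ is one of $O^{++}\cup O^{--}$, $O^{++}\cup O^{+-}$, $O^{++}\cup O^{-+}$ (corresponding to orientation, time-orientation, space-orientation). The group $\mathbb R^{m+1}_1\rtimes G_1(m+1)$ acts by $(s,A)x=s+Ax$, so $d_xg=A$ for $g=(s,A)$. Definition (rolling). For connected $G$-oriented pseudo-Riemannian submanifolds $M,\widehat M\subset\mathbb R^n_\nu$ of equal dimension and index, a $G$-rolling of $M$ on $\widehat M$ without slipping or twisting is an absolutely continuous curve $(x,g)\colon[0,\tau]\to M\times(\mathbb R^n_\nu\rtimes G_\nu(n))$ such that for a.e. $t$: (i) $\widehat x(t):=g(t)x(t)\in\widehat M$; (ii) $d_{x(t)}g(t)T_{x(t)}M=T_{\widehat x(t)}\widehat M$; (iii) $d_{x(t)}g(t)|_{T_{x(t)}M}$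 preserves $G$-orientation; (iv) $\dot{\widehat x}(t)=d_{x(t)}g(t)\dot x(t)$; (v) $d_{x(t)}g(t)\frac{D}{dt}Z=\frac{D}{dt}(d_{x(t)}g(t)Z)$ for every tangent field $Z$ along $x$; (vi) $d_{x(t)}g(t)\frac{D^\perp}{dt}\Psi=\frac{D^\perp}{dt}(d_{x(t)}g(t)\Psi)$ for every normal field $\Psi$ along $x$. Here $\frac{D}{dt}$ is the tangential projection of the ambient derivative and $\frac{D^\perp}{dt}$ the normal projection. *)

theory Defs
  imports "HOL-Analysis.Analysis"
begin

text \<open>Model of the Lorentz space R^(m+1)_1: the index type is 'm option (finite 'm),
  so that CARD('m option) = m+1 with m = CARD('m) >= 1.  The index None is the
  time coordinate (the first coordinate in the paper), the indices Some i are the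
  m space coordinates.\<close>

type_synonym 'm lvec = "real ^ 'm option"
type_synonym 'm lmat = "real ^ 'm option ^ 'm option"

definition Jmat :: "('m::finite) lmat" where
  "Jmat = (\<chi> i j. if i = j then (if i = None then -1 else 1) else 0)"

definition linner :: "('m::finite) lvec \<Rightarrow> 'm lvec \<Rightarrow> real" where
  "linner x y = x \<bullet> (Jmat *v y)"

definition outer :: "('m::finite) lvec \<Rightarrow> 'm lvec \<Rightarrow> 'm lmat" where
  "outer u v = (\<chi> i j. u $ i * v $ j)"

definition lsphere :: "('m::finite) lvec set" where
  "lsphere = {x. linner x x = 1}"

definition tspace_sphere :: "('m::finite) lvec \<Rightarrow> 'm lvec set" where
  "tspace_sphere x0 = {v. linner v x0 = 0}"

definition aff_tspace :: "('m::finite) lvec \<Rightarrow> 'm lvec set" where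
  "aff_tspace x0 = {x0 + v | v. v \<in> tspace_sphere x0}"

definition O1 :: "('m::finite) lmat set" where
  "O1 = {X. transpose X ** Jmat ** X = Jmat}"

definition time_block :: "('m::finite) lmat \<Rightarrow> real" where
  "time_block X = X $ None $ None"

definition space_block :: "('m::finite) lmat \<Rightarrow> real ^ 'm ^ 'm" where
  "space_block X = (\<chi> i j. X $ Some i $ Some j)"

definition O1pp :: "('m::finite) lmat set" where
  "O1pp = {X \<in> O1. time_block X > 0 \<and> det (space_block X) > 0}"
definition O1pm :: "('m::finite) lmat set" where
  "O1pm = {X \<in> O1. time_block X > 0 \<and> det (space_block X) < 0}"
definition O1mp :: "('m::finite) lmat set" where
  "O1mp = {X \<in> O1. time_block X < 0 \<and> det (space_block X) > 0}"
definition O1mm :: "('m::finite) lmat set" where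
  "O1mm = {X \<in> O1. time_block X < 0 \<and> det (space_block X) < 0}"

text \<open>The three admissible choices of G_1(m+1): orientation, time-orientation,
  space-orientation.\<close>
definition G1_choices :: "('m::finite) lmat set set" where
  "G1_choices = {O1pp \<union> O1mm, O1pp \<union> O1pm, O1pp \<union> O1mp}"

definition abs_cont_on :: "(real \<Rightarrow> 'a::real_normed_vector) \<Rightarrow> real \<Rightarrow> real \<Rightarrow> bool" where
  "abs_cont_on f a b \<longleftrightarrow>
     (\<forall>\<epsilon>>0. \<exists>\<delta>>0. \<forall>(n::nat) (p::nat \<Rightarrow> real) (q::nat \<Rightarrow> real).
        (\<forall>i<n. a \<le> p i \<and> p i \<le> q i \<and> q i \<le> b) \<and>
        (\<forall>i<n. \<forall>j<n. i \<noteq> j \<longrightarrow> q i \<le> p j \<or> q j \<le> p i) \<and>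
        (\<Sum>i<n. q i - p i) < \<delta>
        \<longrightarrow> (\<Sum>i<n. norm (f (q i) - f (p i))) < \<epsilon>)"

definition nspace :: "('m::finite) lvec set \<Rightarrow> 'm lvec set" where
  "nspace T = {v. \<forall>y\<in>T. linner v y = 0}"

definition tproj :: "('m::finite) lvec set \<Rightarrow> 'm lvec \<Rightarrow> 'm lvec" where
  "tproj T v = (THE w. w \<in> T \<and> v - w \<in> nspace T)"

definition nproj :: "('m::finite) lvec set \<Rightarrow> 'm lvec \<Rightarrow> 'm lvec" where
  "nproj T v = v - tproj T v"

text \<open>Preservation of G-orientation by a linear map A restricted to a tangent
  space T of a hypersurface, where the G-orientations of the two hypersurfaces are
  the ones induced from the ambient G-orientation of R^(m+1)_1 by the chosen unit
  normals N (at the source point) and Nh (at the target point): the isometric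
  extension of A|T sending N to Nh lies in G.\<close>
definition preserves_G_orient ::
  "('m::finite) lmat set \<Rightarrow> 'm lvec set \<Rightarrow> 'm lvec \<Rightarrow> 'm lvec \<Rightarrow> 'm lmat \<Rightarrow> bool" where
  "preserves_G_orient G T N Nh A \<longleftrightarrow>
     (\<exists>L\<in>G. (\<forall>v\<in>T. L *v v = A *v v) \<and> L *v N = Nh)"

text \<open>G-rolling without slipping or twisting of a hypersurface M (tangent spaces TM,
  unit normal field NM defining its induced G-orientation) on a hypersurface Mh
  (tangent spaces TMh, unit normal field NMh), along the curve (x,g) with
  g(t) = (s t, A t) in R^(m+1)_1 semidirect G, acting by g y = s + A y, so d g = A.\<close>
definition rolling ::
  "('m::finite) lmat set \<Rightarrow>
   'm lvec set \<Rightarrow> ('m lvec \<Rightarrow> 'm lvec set) \<Rightarrow> ('m lvec \<Rightarrow> 'm lvec) \<Rightarrow>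
   'm lvec set \<Rightarrow> ('m lvec \<Rightarrow> 'm lvec set) \<Rightarrow> ('m lvec \<Rightarrow> 'm lvec) \<Rightarrow>
   real \<Rightarrow> (real \<Rightarrow> 'm lvec) \<Rightarrow> (real \<Rightarrow> 'm lvec) \<Rightarrow> (real \<Rightarrow> 'm lmat) \<Rightarrow> bool" where
  "rolling G M TM NM Mh TMh NMh \<tau> x s A \<longleftrightarrow>
    (let xh = (\<lambda>t. s t + A t *v x t) in
     abs_cont_on (\<lambda>t. (x t, s t, A t)) 0 \<tau> \<and>
     (\<forall>t\<in>{0..\<tau>}. x t \<in> M \<and> A t \<in> G) \<and>
     (AE t in lebesgue. t \<in> {0..\<tau>} \<longrightarrow>
        xh t \<in> Mh \<and>
        (\<lambda>v. A t *v v) ` TM (x t) = TMh (xh t) \<and>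
        preserves_G_orient G (TM (x t)) (NM (x t)) (NMh (xh t)) (A t) \<and>
        (\<exists>a b. (x has_vector_derivative a) (at t within {0..\<tau>}) \<and>
               (xh has_vector_derivative b) (at t within {0..\<tau>}) \<and>
               b = A t *v a) \<and>
        (\<forall>Z Z' W'. (\<forall>r\<in>{0..\<tau>}. Z r \<in> TM (x r)) \<and>
              (Z has_vector_derivative Z') (at t within {0..\<tau>}) \<and>
              ((\<lambda>r. A r *v Z r) has_vector_derivative W') (at t within {0..\<tau>})
              \<longrightarrow> A t *v tproj (TM (x t)) Z' = tproj (TMh (xh t)) W') \<and>
        (\<forall>\<Psi> \<Psi>' W'. (\<forall>r\<in>{0..\<tau>}. \<Psi> r \<in> nspace (TM (x r))) \<and>
              (\<Psi> has_vector_derivative \<Psi>') (at t within {0..\<tau>}) \<and>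
              ((\<lambda>r. A r *v \<Psi> r) has_vector_derivative W') (at t within {0..\<tau>})
              \<longrightarrow> A t *v nproj (TM (x t)) \<Psi>' = nproj (TMh (xh t)) W')))"

end

theory Submission
  imports Defs
begin

text \<open>
  Write \<open>\<Omega> = u \<and> x\<^sub>0 = u x\<^sub>0\<^sup>t - x\<^sub>0 u\<^sup>t\<close>, so that \<open>R' = R \<Omega> J\<close> with \<open>\<Omega>\<close> skew.
  Then \<open>(R J R\<^sup>t)' = 0\<close> almost everywhere, and since \<open>R J R\<^sup>t\<close> is absolutely continuous it is
  constant, equal to \<open>J\<close>: \<open>R(t)\<close> is a Lorentz transformation, and by continuity it stays in the
  identity component \<open>O\<^sup>+\<^sup>+\<^sub>1\<close>.  Likewise \<open>\<langle>s, x\<^sub>0\<rangle>\<close> is constant, so \<open>s(t)\<close> is tangent at \<open>x\<^sub>0\<close>.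
  The rolling conditions then reduce to linear algebra at a fixed time: \<open>X = R\<^sup>-\<^sup>1\<close> is an isometry
  carrying \<open>R x\<^sub>0\<close> to \<open>x\<^sub>0\<close>, hence tangent and normal spaces and projections onto each other, and
  differentiating \<open>R\<^sup>-\<^sup>1 F\<close> only adds the term \<open>-\<Omega> J R\<^sup>-\<^sup>1 F\<close>, which is normal at \<open>x\<^sub>0\<close> for
  tangent \<open>F\<close> and tangent at \<open>x\<^sub>0\<close> for normal \<open>F\<close>; so there is neither slipping nor twisting.
\<close>

subsection \<open>Absolute continuity: closure properties\<close>

text \<open>Absolutely continuous curves are continuous (apply the definition to a single interval).\<close>
lemma ac_continuous:
  assumes ac: "abs_cont_on f a b"
  shows "continuous_on {a..b} f"
  unfolding continuous_on_iff
proof (intro ballI allI impI)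
  fix x e assume x: "x \<in> {a..b}" and e: "(e::real) > 0"
  obtain \<delta> where \<delta>: "\<delta> > 0" and small: "\<forall>(n::nat) p q.
      (\<forall>i<n. a \<le> p i \<and> p i \<le> q i \<and> q i \<le> b) \<and>
      (\<forall>i<n. \<forall>j<n. i \<noteq> j \<longrightarrow> q i \<le> p j \<or> q j \<le> p i) \<and>
      (\<Sum>i<n. q i - p i) < \<delta> \<longrightarrow> (\<Sum>i<n. norm (f (q i) - f (p i))) < e"
    using ac e unfolding abs_cont_on_def by blast
  have single: "norm (f w - f v) < e" if "a \<le> v" "v \<le> w" "w \<le> b" "w - v < \<delta>" for v w
    using small[rule_format, of 1 "\<lambda>_. v" "\<lambda>_. w"] that by simp
  show "\<exists>d>0. \<forall>x'\<in>{a..b}. dist x' x < d \<longrightarrow> dist (f x') (f x) < e"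
  proof (intro exI[of _ \<delta>] conjI ballI impI)
    fix x' assume x': "x' \<in> {a..b}" "dist x' x < \<delta>"
    show "dist (f x') (f x) < e"
    proof (cases "x \<le> x'")
      case True
      then show ?thesis using single[of x x'] x x' by (auto simp: dist_norm dist_real_def)
    next
      case False
      then show ?thesis
        using single[of x' x] x x' by (auto simp: dist_norm norm_minus_commute dist_real_def)
    qed
  qed (rule \<delta>)
qed

lemma ac_bounded:
  assumes "abs_cont_on f a b"
  obtains M where "M \<ge> 0" "\<And>t. t \<in> {a..b} \<Longrightarrow> norm (f t) \<le> M"
proof -
  have "compact (f ` {a..b})" using compact_continuous_image[OF ac_continuous[OF assms]] by simp
  from compact_imp_bounded[OF this] obtain M where "\<forall>y\<in>f ` {a..b}. norm y \<le> M"
    unfolding bounded_iff by blast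
  then have "\<And>t. t \<in> {a..b} \<Longrightarrow> norm (f t) \<le> max M 0" by force
  then show ?thesis using that[of "max M 0"] by simp
qed

lemma ac_dominated:
  fixes f :: "real \<Rightarrow> 'a::real_normed_vector" and g :: "real \<Rightarrow> 'b::real_normed_vector"
    and h :: "real \<Rightarrow> 'c::real_normed_vector"
  assumes f: "abs_cont_on f a b" and g: "abs_cont_on g a b" and A: "A \<ge> 0" and B: "B \<ge> 0"
    and h: "\<And>t t'. t \<in> {a..b} \<Longrightarrow> t' \<in> {a..b} \<Longrightarrow>
          norm (h t - h t') \<le> A * norm (f t - f t') + B * norm (g t - g t')"
  shows "abs_cont_on h a b"
  unfolding abs_cont_on_def
proof (intro allI impI)
  fix \<epsilon> :: real assume \<epsilon>: "\<epsilon> > 0"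
  define \<epsilon>A \<epsilon>B where "\<epsilon>A = \<epsilon> / (2 * (A + 1))" and "\<epsilon>B = \<epsilon> / (2 * (B + 1))"
  have "\<epsilon>A > 0" "\<epsilon>B > 0" using \<epsilon> A B unfolding \<epsilon>A_def \<epsilon>B_def by simp_all
  then obtain \<delta>1 where \<delta>1: "\<delta>1 > 0" and
    small_f: "\<forall>(n::nat) p q. (\<forall>i<n. a \<le> p i \<and> p i \<le> q i \<and> q i \<le> b) \<and>
        (\<forall>i<n. \<forall>j<n. i \<noteq> j \<longrightarrow> q i \<le> p j \<or> q j \<le> p i) \<and>
        (\<Sum>i<n. q i - p i) < \<delta>1 \<longrightarrow> (\<Sum>i<n. norm (f (q i) - f (p i))) < \<epsilon>A"
    using f unfolding abs_cont_on_def by blast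
  obtain \<delta>2 where \<delta>2: "\<delta>2 > 0" and
    small_g: "\<forall>(n::nat) p q. (\<forall>i<n. a \<le> p i \<and> p i \<le> q i \<and> q i \<le> b) \<and>
        (\<forall>i<n. \<forall>j<n. i \<noteq> j \<longrightarrow> q i \<le> p j \<or> q j \<le> p i) \<and>
        (\<Sum>i<n. q i - p i) < \<delta>2 \<longrightarrow> (\<Sum>i<n. norm (g (q i) - g (p i))) < \<epsilon>B"
    using g \<open>\<epsilon>B > 0\<close> unfolding abs_cont_on_def by blast
  show "\<exists>\<delta>>0. \<forall>(n::nat) p q. (\<forall>i<n. a \<le> p i \<and> p i \<le> q i \<and> q i \<le> b) \<and>
        (\<forall>i<n. \<forall>j<n. i \<noteq> j \<longrightarrow> q i \<le> p j \<or> q j \<le> p i) \<and>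
        (\<Sum>i<n. q i - p i) < \<delta> \<longrightarrow> (\<Sum>i<n. norm (h (q i) - h (p i))) < \<epsilon>"
  proof (intro exI[of _ "min \<delta>1 \<delta>2"] conjI allI impI)
    show "min \<delta>1 \<delta>2 > 0" using \<delta>1 \<delta>2 by simp
    fix n :: nat and p q :: "nat \<Rightarrow> real"
    assume fam: "(\<forall>i<n. a \<le> p i \<and> p i \<le> q i \<and> q i \<le> b) \<and>
        (\<forall>i<n. \<forall>j<n. i \<noteq> j \<longrightarrow> q i \<le> p j \<or> q j \<le> p i) \<and> (\<Sum>i<n. q i - p i) < min \<delta>1 \<delta>2"
    have sf: "(\<Sum>i<n. norm (f (q i) - f (p i))) < \<epsilon>A" using small_f fam by auto
    have sg: "(\<Sum>i<n. norm (g (q i) - g (p i))) < \<epsilon>B" using small_g fam by auto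
    have "(\<Sum>i<n. norm (h (q i) - h (p i))) \<le>
        (\<Sum>i<n. A * norm (f (q i) - f (p i)) + B * norm (g (q i) - g (p i)))"
      by (rule sum_mono) (use fam h in auto)
    also have "\<dots> = A * (\<Sum>i<n. norm (f (q i) - f (p i))) + B * (\<Sum>i<n. norm (g (q i) - g (p i)))"
      by (simp add: sum.distrib sum_distrib_left)
    also have "\<dots> \<le> A * \<epsilon>A + B * \<epsilon>B"
      using sf sg A B by (intro add_mono mult_left_mono) auto
    also have "\<dots> < \<epsilon> / 2 + \<epsilon> / 2"
      using A B \<epsilon> unfolding \<epsilon>A_def \<epsilon>B_def by (intro add_less_le_mono) (simp_all add: field_simps)
    finally show "(\<Sum>i<n. norm (h (q i) - h (p i))) < \<epsilon>" by simp
  qed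
qed

lemma ac_cong:
  assumes f: "abs_cont_on f a b" and eq: "\<And>t. t \<in> {a..b} \<Longrightarrow> g t = f t"
  shows "abs_cont_on g a b"
  by (rule ac_dominated[OF f f, of 1 0]) (simp_all add: eq)

lemma ac_linear:
  assumes L: "bounded_linear L" and f: "abs_cont_on f a b"
  shows "abs_cont_on (\<lambda>t. L (f t)) a b"
proof -
  obtain K where K: "\<And>x. norm (L x) \<le> norm x * K" using bounded_linear.bounded[OF L] by blast
  show ?thesis
  proof (rule ac_dominated[OF f f, of "\<bar>K\<bar>" 0])
    fix t t'
    have "norm (L (f t) - L (f t')) = norm (L (f t - f t'))"
      by (simp add: linear_diff[OF bounded_linear.linear[OF L]])
    also have "\<dots> \<le> norm (f t - f t') * K" by (rule K)
    also have "\<dots> \<le> \<bar>K\<bar> * norm (f t - f t')" by (simp add: mult.commute mult_right_mono)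
    finally show "norm (L (f t) - L (f t')) \<le> \<bar>K\<bar> * norm (f t - f t') + 0 * norm (f t - f t')"
      by simp
  qed auto
qed

lemma ac_bilinear:
  assumes P: "bounded_bilinear P" and f: "abs_cont_on f a b" and g: "abs_cont_on g a b"
  shows "abs_cont_on (\<lambda>t. P (f t) (g t)) a b"
proof -
  obtain K where K0: "K \<ge> 0" and K: "\<And>x y. norm (P x y) \<le> norm x * norm y * K"
    using bounded_bilinear.nonneg_bounded[OF P] by blast
  obtain Mf where Mf: "Mf \<ge> 0" "\<And>t. t \<in> {a..b} \<Longrightarrow> norm (f t) \<le> Mf" using ac_bounded[OF f] by blast
  obtain Mg where Mg: "Mg \<ge> 0" "\<And>t. t \<in> {a..b} \<Longrightarrow> norm (g t) \<le> Mg" using ac_bounded[OF g] by blast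
  show ?thesis
  proof (rule ac_dominated[OF f g, of "Mg * K" "Mf * K"])
    show "Mg * K \<ge> 0" "Mf * K \<ge> 0" using K0 Mf Mg by simp_all
    fix t t' assume t: "t \<in> {a..b}" and t': "t' \<in> {a..b}"
    have "P (f t) (g t) - P (f t') (g t') = P (f t - f t') (g t) + P (f t') (g t - g t')"
      by (simp add: bounded_bilinear.diff_left[OF P] bounded_bilinear.diff_right[OF P])
    then have "norm (P (f t) (g t) - P (f t') (g t')) \<le>
        norm (P (f t - f t') (g t)) + norm (P (f t') (g t - g t'))"
      by (metis norm_triangle_ineq)
    also have "\<dots> \<le> norm (f t - f t') * norm (g t) * K + norm (f t') * norm (g t - g t') * K"
      by (rule add_mono[OF K K])
    also have "\<dots> \<le> norm (f t - f t') * Mg * K + Mf * norm (g t - g t') * K"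
      using Mf Mg t t' K0 by (intro add_mono mult_right_mono mult_left_mono) auto
    finally show "norm (P (f t) (g t) - P (f t') (g t')) \<le>
        Mg * K * norm (f t - f t') + Mf * K * norm (g t - g t')"
      by (simp add: algebra_simps)
  qed
qed

lemma ac_pair:
  assumes f: "abs_cont_on f a b" and g: "abs_cont_on g a b"
  shows "abs_cont_on (\<lambda>t. (f t, g t)) a b"
proof (rule ac_dominated[OF f g, of 1 1])
  fix t t'
  show "norm ((f t, g t) - (f t', g t')) \<le> 1 * norm (f t - f t') + 1 * norm (g t - g t')"
    using norm_Pair_le[of "f t - f t'" "g t - g t'"] by simp
qed auto

lemma ac_subinterval:
  assumes "abs_cont_on f a b" "a \<le> c" "d \<le> b"
  shows "abs_cont_on f c d"
  using assms unfolding abs_cont_on_def by (smt (verit, ccfv_SIG))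

subsection \<open>Absolute continuity: vanishing derivative almost everywhere\<close>

definition nonoverlapping_in :: "real \<Rightarrow> real \<Rightarrow> 'i set \<Rightarrow> ('i \<Rightarrow> real) \<Rightarrow> ('i \<Rightarrow> real) \<Rightarrow> bool" where
  "nonoverlapping_in a b I p q \<longleftrightarrow> finite I \<and> (\<forall>i\<in>I. a \<le> p i \<and> p i \<le> q i \<and> q i \<le> b) \<and>
     (\<forall>i\<in>I. \<forall>j\<in>I. i \<noteq> j \<longrightarrow> q i \<le> p j \<or> q j \<le> p i)"

lemma ac_finite_family:
  assumes ac: "abs_cont_on f a b" and \<epsilon>: "\<epsilon> > 0"
  obtains \<delta> where "\<delta> > 0"
    "\<And>(I :: 'i set) p q. nonoverlapping_in a b I p q \<Longrightarrow>
       (\<Sum>i\<in>I. q i - p i) < \<delta> \<Longrightarrow> (\<Sum>i\<in>I. norm (f (q i) - f (p i))) < \<epsilon>"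
proof -
  obtain \<delta> where \<delta>: "\<delta> > 0" and small:
    "\<forall>(n::nat) p q. (\<forall>i<n. a \<le> p i \<and> p i \<le> q i \<and> q i \<le> b) \<and>
       (\<forall>i<n. \<forall>j<n. i \<noteq> j \<longrightarrow> q i \<le> p j \<or> q j \<le> p i) \<and>
       (\<Sum>i<n. q i - p i) < \<delta> \<longrightarrow> (\<Sum>i<n. norm (f (q i) - f (p i))) < \<epsilon>"
    using ac \<epsilon> unfolding abs_cont_on_def by blast
  have "(\<Sum>i\<in>I. norm (f (q i) - f (p i))) < \<epsilon>"
    if fam: "nonoverlapping_in a b I p q" and len: "(\<Sum>i\<in>I. q i - p i) < \<delta>"
    for I :: "'i set" and p q
  proof -
    have I: "finite I" "\<forall>i\<in>I. a \<le> p i \<and> p i \<le> q i \<and> q i \<le> b"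
      "\<forall>i\<in>I. \<forall>j\<in>I. i \<noteq> j \<longrightarrow> q i \<le> p j \<or> q j \<le> p i"
      using fam unfolding nonoverlapping_in_def by auto
    obtain g where g: "bij_betw g {..<card I} I"
      using ex_bij_betw_nat_finite[OF I(1)] by (metis atLeast0LessThan)
    have reindex: "(\<Sum>k<card I. h (g k)) = (\<Sum>i\<in>I. h i)" for h :: "'i \<Rightarrow> real"
      using sum.reindex_bij_betw[OF g] .
    have "(\<Sum>k<card I. norm (f (q (g k)) - f (p (g k)))) < \<epsilon>"
    proof (rule small[rule_format, OF conjI[OF _ conjI]])
      have gI: "g k \<in> I" if "k < card I" for k
        using bij_betwE[OF g] that by blast
      show "\<forall>k<card I. a \<le> p (g k) \<and> p (g k) \<le> q (g k) \<and> q (g k) \<le> b"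
        using I(2) gI by blast
      have "g k \<noteq> g l" if "k < card I" "l < card I" "k \<noteq> l" for k l
        using bij_betw_imp_inj_on[OF g] that by (simp add: inj_on_eq_iff)
      then show "\<forall>k<card I. \<forall>l<card I. k \<noteq> l \<longrightarrow> q (g k) \<le> p (g l) \<or> q (g l) \<le> p (g k)"
        using I(3) gI by blast
      show "(\<Sum>k<card I. q (g k) - p (g k)) < \<delta>" using len reindex[of "\<lambda>i. q i - p i"] by simp
    qed
    then show ?thesis using reindex[of "\<lambda>i. norm (f (q i) - f (p i))"] by simp
  qed
  with \<delta> show ?thesis by (rule that)
qed

lemma nonoverlapping_intervals_length_le:
  fixes p q :: "'i \<Rightarrow> real"
  assumes fam: "nonoverlapping_in a b I p q"
    and sub: "\<forall>i\<in>I. {p i..q i} \<subseteq> U" and U: "U \<in> lmeasurable"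
  shows "(\<Sum>i\<in>I. q i - p i) \<le> measure lebesgue U"
proof -
  have I: "finite I" and le: "\<forall>i\<in>I. p i \<le> q i"
    and ord: "\<forall>i\<in>I. \<forall>j\<in>I. i \<noteq> j \<longrightarrow> q i \<le> p j \<or> q j \<le> p i"
    using fam unfolding nonoverlapping_in_def by auto
  have "(\<Sum>i\<in>I. q i - p i) = (\<Sum>i\<in>I. measure lebesgue {p i..q i})"
    using le by simp
  also have "\<dots> = measure lebesgue (\<Union>i\<in>I. {p i..q i})"
  proof (rule measure_negligible_finite_Union_image[symmetric, OF I])
    show "pairwise (\<lambda>i j. negligible ({p i..q i} \<inter> {p j..q j})) I"
    proof (rule pairwiseI)
      fix i j assume "i \<in> I" "j \<in> I" "i \<noteq> j"
      then have "{p i..q i} \<inter> {p j..q j} \<subseteq> {p i, p j}" using ord by fastforce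
      then show "negligible ({p i..q i} \<inter> {p j..q j})" by (rule negligible_subset[rotated]) auto
    qed
  qed auto
  also have "\<dots> \<le> measure lebesgue U"
    using sub I U by (intro measure_mono_fmeasurable) auto
  finally show ?thesis .
qed

lemma negligible_open_cover:
  assumes N: "negligible N" and \<delta>: "\<delta> > 0"
  obtains U where "open U" "N \<subseteq> U" "U \<in> lmeasurable" "measure lebesgue U < \<delta>"
proof -
  have Nl: "N \<in> sets lebesgue" using N negligible_iff_null_sets null_setsD2 by blast
  obtain U where U: "open U" "N \<subseteq> U" "U - N \<in> lmeasurable" "emeasure lebesgue (U - N) < ennreal \<delta>"
    using sets_lebesgue_outer_open[OF Nl \<delta>] by metis
  have sd: "negligible (sym_diff (U - N) U)"
    by (rule negligible_subset[OF N]) auto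
  have "measure lebesgue U = measure lebesgue (U - N)"
    using measure_negligible_symdiff[OF U(3) sd] by simp
  also have "\<dots> < \<delta>"
    using U(3,4) \<delta> by (simp add: emeasure_eq_measure2 ennreal_less_iff)
  finally show ?thesis using that U(1,2) lmeasurable_negligible_symdiff[OF U(3) sd] by blast
qed

lemma open_intervals_ordered:
  fixes u v u' v' :: real
  assumes "u < v" "u' < v'" "{u<..<v} \<inter> {u'<..<v'} = {}"
  shows "v \<le> u' \<or> v' \<le> u"
proof (rule ccontr)
  assume "\<not> ?thesis"
  then have "(max u u' + min v v') / 2 \<in> {u<..<v} \<inter> {u'<..<v'}"
    using assms(1,2) by (simp add: max_def min_def)
  then show False using assms by blast
qed

lemma tagged_division_1_memD:
  fixes a b :: real
  assumes "p tagged_division_of {a..b}" "(x, K) \<in> p"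
  obtains u v where "K = {u..v}" "a \<le> u" "u \<le> x" "x \<le> v" "v \<le> b"
proof -
  obtain u v where "K = cbox u v" using tagged_division_ofD(4)[OF assms] by blast
  then have K: "K = {u..v}" by simp
  have "x \<in> K" "K \<subseteq> {a..b}" using tagged_division_ofD(2,3)[OF assms] by auto
  with K have "a \<le> u" "u \<le> x" "x \<le> v" "v \<le> b" by auto
  with K show ?thesis by (rule that)
qed

lemma tagged_division_1_nonoverlapping:
  fixes a b :: real
  assumes p: "p tagged_division_of {a..b}"
    and mem: "(x, K) \<in> p" "(y, L) \<in> p" "(x, K) \<noteq> (y, L)"
    and nondeg: "Inf K < Sup K" "Inf L < Sup L"
  shows "Sup K \<le> Inf L \<or> Sup L \<le> Inf K"
proof -
  obtain u v where K: "K = {u..v}" "u \<le> v"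
    using tagged_division_1_memD[OF p mem(1)] by (metis order.trans)
  obtain u' v' where L: "L = {u'..v'}" "u' \<le> v'"
    using tagged_division_1_memD[OF p mem(2)] by (metis order.trans)
  have "interior K \<inter> interior L = {}" using tagged_division_ofD(5)[OF p mem] .
  moreover have "u < v" "u' < v'" using K L nondeg by auto
  ultimately have "v \<le> u' \<or> v' \<le> u"
    using open_intervals_ordered[of u v u' v'] K L by simp
  then show ?thesis using K L by simp
qed

lemma tagged_division_jump_sum_le:
  fixes f :: "real \<Rightarrow> 'a::real_normed_vector" and a b :: real
  assumes p: "p tagged_division_of {a..b}" and ab: "a \<le> b" and e: "0 \<le> e" and Q: "Q \<subseteq> p"
    and slope: "\<And>x K y. (x, K) \<in> Q \<Longrightarrow> y \<in> K \<Longrightarrow> norm (f y - f x) \<le> e * \<bar>y - x\<bar>"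
  shows "(\<Sum>(x, K)\<in>Q. norm (f (Sup K) - f (Inf K))) \<le> e * (b - a)"
proof -
  have fin: "finite p" using tagged_division_ofD(1)[OF p] .
  have "(\<Sum>(x, K)\<in>Q. norm (f (Sup K) - f (Inf K))) \<le> (\<Sum>(x, K)\<in>Q. e * (Sup K - Inf K))"
  proof (rule sum_mono, clarify)
    fix x K assume xK: "(x, K) \<in> Q"
    then obtain u v where K: "K = {u..v}" "u \<le> x" "x \<le> v"
      using tagged_division_1_memD[OF p] Q by blast
    have "norm (f v - f u) \<le> norm (f v - f x) + norm (f x - f u)"
      using norm_triangle_ineq[of "f v - f x" "f x - f u"] by simp
    also have "\<dots> \<le> e * \<bar>v - x\<bar> + e * \<bar>u - x\<bar>"
      using slope[OF xK, of v] slope[OF xK, of u] K by (simp add: norm_minus_commute)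
    also have "\<dots> = e * (v - u)" using K by (simp add: algebra_simps)
    finally show "norm (f (Sup K) - f (Inf K)) \<le> e * (Sup K - Inf K)" using K by simp
  qed
  also have "\<dots> \<le> (\<Sum>(x, K)\<in>p. e * (Sup K - Inf K))"
  proof (rule sum_mono2[OF fin Q], clarify)
    fix x K assume "(x, K) \<in> p"
    then obtain u v where "K = {u..v}" "u \<le> x" "x \<le> v" using tagged_division_1_memD[OF p] by blast
    then show "0 \<le> e * (Sup K - Inf K)" using e by simp
  qed
  also have "\<dots> = e * (b - a)"
    using additive_tagged_division_1[OF ab p, of "\<lambda>x. x"]
    by (simp add: sum_distrib_left[symmetric] case_prod_unfold)
  finally show ?thesis .
qed

lemma tagged_division_cover_jump_sum:
  fixes f :: "real \<Rightarrow> 'a::real_normed_vector" and a b :: real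
  assumes p: "p tagged_division_of {a..b}" and Q: "Q \<subseteq> p"
    and nondeg: "\<And>x K. (x, K) \<in> Q \<Longrightarrow> Inf K < Sup K"
    and cover: "\<And>x K. (x, K) \<in> Q \<Longrightarrow> K \<subseteq> U"
    and U: "U \<in> lmeasurable" "measure lebesgue U < \<delta>"
    and small: "\<And>(I :: (real \<times> real set) set) p q. nonoverlapping_in a b I p q \<Longrightarrow>
      (\<Sum>i\<in>I. q i - p i) < \<delta> \<Longrightarrow> (\<Sum>i\<in>I. norm (f (q i) - f (p i))) < e"
  shows "(\<Sum>(x, K)\<in>Q. norm (f (Sup K) - f (Inf K))) < e"
proof -
  have bounds: "a \<le> Inf K \<and> Inf K \<le> Sup K \<and> Sup K \<le> b \<and> K = {Inf K..Sup K}" if "(x, K) \<in> Q" for x K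
  proof -
    have "(x, K) \<in> p" using that Q by blast
    then obtain u v where "K = {u..v}" "a \<le> u" "u \<le> x" "x \<le> v" "v \<le> b"
      by (rule tagged_division_1_memD[OF p])
    then show ?thesis by simp
  qed
  have fam: "nonoverlapping_in a b Q (\<lambda>z. Inf (snd z)) (\<lambda>z. Sup (snd z))"
    unfolding nonoverlapping_in_def
  proof (intro conjI)
    show "finite Q" using tagged_division_ofD(1)[OF p] Q finite_subset by blast
    show "\<forall>z\<in>Q. a \<le> Inf (snd z) \<and> Inf (snd z) \<le> Sup (snd z) \<and> Sup (snd z) \<le> b"
    proof
      fix z assume "z \<in> Q"
      then show "a \<le> Inf (snd z) \<and> Inf (snd z) \<le> Sup (snd z) \<and> Sup (snd z) \<le> b"
        using bounds[of "fst z" "snd z"] by simp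
    qed
    show "\<forall>z\<in>Q. \<forall>w\<in>Q. z \<noteq> w \<longrightarrow> Sup (snd z) \<le> Inf (snd w) \<or> Sup (snd w) \<le> Inf (snd z)"
    proof (intro ballI impI)
      fix z w assume zw: "z \<in> Q" "w \<in> Q" "z \<noteq> w"
      then have "(fst z, snd z) \<in> p" "(fst w, snd w) \<in> p" "(fst z, snd z) \<noteq> (fst w, snd w)"
        "Inf (snd z) < Sup (snd z)" "Inf (snd w) < Sup (snd w)"
        using Q nondeg[of "fst z" "snd z"] nondeg[of "fst w" "snd w"] by auto
      then show "Sup (snd z) \<le> Inf (snd w) \<or> Sup (snd w) \<le> Inf (snd z)"
        by (rule tagged_division_1_nonoverlapping[OF p])
    qed
  qed
  have "\<forall>z\<in>Q. {Inf (snd z)..Sup (snd z)} \<subseteq> U"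
  proof
    fix z assume "z \<in> Q"
    then show "{Inf (snd z)..Sup (snd z)} \<subseteq> U"
      using bounds[of "fst z" "snd z"] cover[of "fst z" "snd z"] by simp
  qed
  then have "(\<Sum>z\<in>Q. Sup (snd z) - Inf (snd z)) \<le> measure lebesgue U"
    by (rule nonoverlapping_intervals_length_le[OF fam _ U(1)])
  then have "(\<Sum>z\<in>Q. Sup (snd z) - Inf (snd z)) < \<delta>" using U(2) by linarith
  then show ?thesis using small[OF fam] by (simp add: case_prod_unfold)
qed

lemma derivative_zero_gauge:
  fixes f :: "real \<Rightarrow> 'a::real_normed_vector"
  assumes U: "open U" "N \<subseteq> U"
    and d: "\<And>x. x \<in> {a..b} - N \<Longrightarrow> (f has_vector_derivative 0) (at x within {a..b})"
    and e: "e > 0"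
  obtains r where "\<And>x. r x > 0" and "\<And>x. x \<in> N \<Longrightarrow> ball x (r x) \<subseteq> U"
    and "\<And>x y. x \<in> {a..b} - N \<Longrightarrow> y \<in> {a..b} \<Longrightarrow> \<bar>y - x\<bar> < r x \<Longrightarrow>
        norm (f y - f x) \<le> e * \<bar>y - x\<bar>"
proof -
  have "\<exists>r>0. (x \<in> N \<longrightarrow> ball x r \<subseteq> U) \<and>
      (x \<in> {a..b} - N \<longrightarrow> (\<forall>y\<in>{a..b}. \<bar>y - x\<bar> < r \<longrightarrow> norm (f y - f x) \<le> e * \<bar>y - x\<bar>))" for x
  proof (cases "x \<in> N")
    case True
    then show ?thesis using U open_contains_ball by blast
  next
    case False
    show ?thesis
    proof (cases "x \<in> {a..b}")
      case True
      with False have "\<exists>r>0. \<forall>y\<in>{a..b}. \<bar>y - x\<bar> < r \<longrightarrow> norm (f y - f x) \<le> e * \<bar>y - x\<bar>"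
        using d[of x] e unfolding has_vector_derivative_def has_derivative_within_alt
        by (auto simp: real_norm_def)
      with False show ?thesis by blast
    next
      case outside: False
      with False show ?thesis by (intro exI[of _ 1]) auto
    qed
  qed
  then show ?thesis using that by metis
qed

text \<open>Take a tagged division of \<open>[a, b]\<close>
  that is fine for a gauge adapted both to the derivative and to a small open cover \<open>U\<close> of \<open>N\<close>;
  the intervals tagged outside \<open>N\<close> contribute at most \<open>e (b - a)\<close>, the nondegenerate ones tagged
  in \<open>N\<close> lie in \<open>U\<close> and contribute less than \<open>e\<close>, and the degenerate ones contribute nothing.\<close>
lemma ac_jump_bound:
  fixes f :: "real \<Rightarrow> 'a::real_normed_vector"
  assumes ac: "abs_cont_on f a b" and ab: "a \<le> b" and N: "negligible N"
    and d: "\<And>x. x \<in> {a..b} - N \<Longrightarrow> (f has_vector_derivative 0) (at x within {a..b})"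
    and e: "e > 0"
  shows "norm (f b - f a) \<le> e * (b - a) + e"
proof -
  obtain \<delta> where \<delta>: "\<delta> > 0" and small: "\<And>(I :: (real \<times> real set) set) p q.
      nonoverlapping_in a b I p q \<Longrightarrow> (\<Sum>i\<in>I. q i - p i) < \<delta> \<Longrightarrow>
      (\<Sum>i\<in>I. norm (f (q i) - f (p i))) < e"
    using ac_finite_family[OF ac e] by blast
  obtain U where U: "open U" "N \<subseteq> U" "U \<in> lmeasurable" "measure lebesgue U < \<delta>"
    using negligible_open_cover[OF N \<delta>] by blast
  obtain r where r_pos: "\<And>x. r x > 0" and r_cover: "\<And>x. x \<in> N \<Longrightarrow> ball x (r x) \<subseteq> U"
    and r_slope: "\<And>x y. x \<in> {a..b} - N \<Longrightarrow> y \<in> {a..b} \<Longrightarrow> \<bar>y - x\<bar> < r x \<Longrightarrow>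
        norm (f y - f x) \<le> e * \<bar>y - x\<bar>"
    using derivative_zero_gauge[OF U(1,2) d e] by blast
  obtain p where p: "p tagged_division_of {a..b}" and fine: "(\<lambda>x. ball x (r x)) fine p"
    using fine_division_exists_real[OF gauge_ball_dependent] r_pos by metis
  have fin: "finite p" using tagged_division_ofD(1)[OF p] .
  have in_ball: "K \<subseteq> ball x (r x)" if "(x, K) \<in> p" for x K
    using fine that unfolding fine_def by blast
  define jump where "jump = (\<lambda>(x::real, K::real set). norm (f (Sup K) - f (Inf K)))"
  define P1 where "P1 = {(x, K) \<in> p. x \<in> N \<and> Inf K < Sup K}"
  define P2 where "P2 = {(x, K) \<in> p. x \<notin> N}"
  have P_sub: "P1 \<subseteq> p" "P2 \<subseteq> p" unfolding P1_def P2_def by auto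
  have "norm (f b - f a) \<le> sum jump p"
    using additive_tagged_division_1[OF ab p, of f] norm_sum[of "\<lambda>(x, K). f (Sup K) - f (Inf K)" p]
    by (simp add: jump_def case_prod_unfold)
  also have "sum jump p = sum jump (P1 \<union> P2)"
  proof (rule sum.mono_neutral_right[OF fin])
    show "P1 \<union> P2 \<subseteq> p" using P_sub by blast
    show "\<forall>z\<in>p - (P1 \<union> P2). jump z = 0"
    proof
      fix z assume z: "z \<in> p - (P1 \<union> P2)"
      obtain x K where xK: "z = (x, K)" by fastforce
      have "(x, K) \<in> p" using z unfolding xK by blast
      then obtain u v where K: "K = {u..v}" "u \<le> x" "x \<le> v" by (rule tagged_division_1_memD[OF p])
      with z have "\<not> u < v" unfolding xK P1_def P2_def by auto
      with K have "K = {u..u}" by simp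
      then show "jump z = 0" unfolding xK jump_def by simp
    qed
  qed
  also have "\<dots> = sum jump P1 + sum jump P2"
    using finite_subset[OF P_sub(1) fin] finite_subset[OF P_sub(2) fin]
    by (intro sum.union_disjoint) (auto simp: P1_def P2_def)
  also have "sum jump P1 < e"
    unfolding jump_def
  proof (rule tagged_division_cover_jump_sum[OF p _ _ _ U(3,4) small])
    show "P1 \<subseteq> p" by (rule P_sub(1))
    show "Inf K < Sup K" "K \<subseteq> U" if "(x, K) \<in> P1" for x K
      using that in_ball[of x K] r_cover[of x] unfolding P1_def by auto
  qed
  also have "sum jump P2 \<le> e * (b - a)"
    unfolding jump_def
  proof (rule tagged_division_jump_sum_le[OF p ab less_imp_le[OF e]])
    show "P2 \<subseteq> p" by (rule P_sub(2))
    fix x K y assume xK: "(x, K) \<in> P2" and y: "y \<in> K"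
    then have xKp: "(x, K) \<in> p" and "x \<notin> N" unfolding P2_def by auto
    moreover have "x \<in> K" "K \<subseteq> {a..b}" using tagged_division_ofD(2,3)[OF p xKp] by auto
    ultimately have "x \<in> {a..b} - N" "y \<in> {a..b}" using y by auto
    moreover have "y \<in> ball x (r x)" using in_ball[OF xKp] y by blast
    then have "\<bar>y - x\<bar> < r x" by (simp add: dist_real_def abs_minus_commute)
    ultimately show "norm (f y - f x) \<le> e * \<bar>y - x\<bar>" by (rule r_slope)
  qed
  finally show ?thesis by simp
qed

text \<open>Letting \<open>e \<rightarrow> 0\<close>: an absolutely continuous curve with derivative 0 off a negligible set
  is constant.\<close>
lemma ac_zero_derivative_const:
  fixes f :: "real \<Rightarrow> 'a::real_normed_vector"
  assumes ac: "abs_cont_on f a b" and ab: "a \<le> b" and N: "negligible N"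
    and d: "\<And>x. x \<in> {a..b} - N \<Longrightarrow> (f has_vector_derivative 0) (at x within {a..b})"
  shows "f b = f a"
proof (rule ccontr)
  assume "f b \<noteq> f a"
  then have D: "norm (f b - f a) > 0" by simp
  define e where "e = norm (f b - f a) / (2 * (b - a + 1))"
  have e: "e > 0" using D ab unfolding e_def by simp
  have "norm (f b - f a) \<le> e * (b - a + 1)"
    using ac_jump_bound[OF ac ab N d e] by (simp add: algebra_simps)
  also have "\<dots> = norm (f b - f a) / 2" using ab unfolding e_def by (simp add: field_simps)
  finally show False using D by simp
qed

lemma ac_AE_zero_derivative_const:
  fixes f :: "real \<Rightarrow> 'a::real_normed_vector"
  assumes ac: "abs_cont_on f a b"
    and d: "AE x in lebesgue. x \<in> {a..b} \<longrightarrow> (f has_vector_derivative 0) (at x within {a..b})"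
    and x: "x \<in> {a..b}"
  shows "f x = f a"
proof -
  obtain N where N: "N \<in> null_sets lebesgue"
    and good: "\<And>y. y \<notin> N \<Longrightarrow> y \<in> {a..b} \<longrightarrow> (f has_vector_derivative 0) (at y within {a..b})"
    using d by (auto elim!: AE_E3)
  show ?thesis
  proof (rule ac_zero_derivative_const[OF ac_subinterval[OF ac order_refl]])
    show "a \<le> x" "x \<le> b" using x by auto
    show "negligible N" using N negligible_iff_null_sets by blast
    fix y assume "y \<in> {a..x} - N"
    then have "(f has_vector_derivative 0) (at y within {a..b})" using good x by auto
    then show "(f has_vector_derivative 0) (at y within {a..x})"
      by (rule has_vector_derivative_within_subset) (use x in auto)
  qed
qed

subsection \<open>The Lorentzian form\<close>

definition dJ :: "'a option \<Rightarrow> real" where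
  "dJ i = (if i = None then -1 else 1)"

lemma Jmat_diag: "(Jmat::('m::finite) lmat) = (\<chi> i j. if i = j then dJ i else 0)"
  unfolding Jmat_def dJ_def by simp

lemma dJ_sq [simp]: "dJ i * dJ i = 1"
  by (simp add: dJ_def)

lemma Jmat_mult_right:
  "((A::real^'m option^'n) ** (Jmat::('m::finite) lmat)) $ i $ j = A $ i $ j * dJ j"
  by (simp add: matrix_matrix_mult_def Jmat_diag if_distrib[of "\<lambda>x. _ * x"] cong: if_cong)

lemma Jmat_mult_left:
  "((Jmat::('m::finite) lmat) ** (A::real^'n^'m option)) $ i $ j = dJ i * A $ i $ j"
  by (simp add: matrix_matrix_mult_def Jmat_diag if_distrib[of "\<lambda>x. x * _"] cong: if_cong)

lemma Jmat_mv: "((Jmat::('m::finite) lmat) *v x) $ i = dJ i * x $ i"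
  by (simp add: matrix_vector_mult_def Jmat_diag if_distrib[of "\<lambda>x. x * _"] cong: if_cong)

lemma Jmat_transpose [simp]: "transpose (Jmat::('m::finite) lmat) = Jmat"
  by (simp add: transpose_def Jmat_def vec_eq_iff)

lemma Jmat_sq [simp]: "(Jmat::('m::finite) lmat) ** Jmat = mat 1"
  unfolding vec_eq_iff Jmat_mult_left by (simp add: Jmat_diag mat_def)

lemma Jmat_Jmat_left [simp]: "(Jmat::('m::finite) lmat) ** (Jmat ** Y) = Y"
  by (simp add: matrix_mul_assoc)

lemma sum_UNIV_option:
  "(\<Sum>i\<in>(UNIV::'a option set). f i) = f None + (\<Sum>k\<in>(UNIV::'a::finite set). f (Some k))"
proof -
  have "sum f (insert None (range Some)) = f None + sum f (range Some)" by (rule sum.insert) auto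
  moreover have "sum f (range Some) = (\<Sum>k\<in>UNIV. f (Some k))" by (simp add: sum.reindex)
  ultimately show ?thesis by (simp add: UNIV_option_conv[symmetric])
qed

lemma inner_matrix_vector: "((A::real^'n^'m) *v x) \<bullet> y = x \<bullet> (transpose A *v y)"
  by (metis dot_lmul_matrix transpose_matrix_vector transpose_transpose)

lemma linner_sym: "linner x y = linner y x"
  unfolding linner_def by (metis inner_matrix_vector Jmat_transpose inner_commute)

lemma linner_expand: "linner x y = - (x $ None * y $ None) + (\<Sum>k\<in>UNIV. x $ Some k * y $ Some k)"
  unfolding linner_def inner_vec_def by (simp add: sum_UNIV_option Jmat_mv dJ_def)

lemma linner_add_left: "linner (x + y) z = linner x z + linner y z"
  by (simp add: linner_def inner_add_left)

lemma linner_diff_left: "linner (x - y) z = linner x z - linner y z"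
  by (simp add: linner_def inner_diff_left)

lemma linner_diff_right: "linner z (x - y) = linner z x - linner z y"
  by (simp add: linner_def inner_diff_right matrix_vector_mult_diff_distrib)

lemma linner_scale_left: "linner (c *\<^sub>R x) z = c * linner x z"
  by (simp add: linner_def)

lemma linner_scale_right: "linner z (c *\<^sub>R x) = c * linner z x"
  by (simp add: linner_def matrix_vector_mult_scaleR)

lemma bounded_linear_linner_left: "bounded_linear (\<lambda>v. linner v c)"
  unfolding linner_def by (rule bounded_linear_inner_left)

lemma linner_nondegenerate:
  assumes "\<And>z. linner d (z::('m::finite) lvec) = 0"
  shows "d = 0"
proof -
  have "d $ i = 0" for i
  proof -
    have "linner d (axis i 1) = linner (axis i 1) d" by (rule linner_sym)
    also have "\<dots> = dJ i * d $ i" by (simp add: linner_def inner_axis' Jmat_mv)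
    finally show ?thesis using assms[of "axis i 1"] by (simp add: dJ_def split: if_splits)
  qed
  then show ?thesis by (simp add: vec_eq_iff)
qed

lemma outer_mv: "outer a b *v w = (b \<bullet> w) *\<^sub>R a"
  by (simp add: outer_def matrix_vector_mult_def inner_vec_def vec_eq_iff sum_distrib_left algebra_simps)

subsection \<open>The Lorentz group\<close>

text \<open>The Lorentzian adjoint \<open>J X\<^sup>t J\<close>; for \<open>X \<in> O\<^sub>1\<close> it is the inverse of \<open>X\<close>.\<close>
definition ladj :: "('m::finite) lmat \<Rightarrow> 'm lmat" where
  "ladj X = Jmat ** transpose X ** Jmat"

lemma O1_linner:
  assumes "X \<in> O1"
  shows "linner (X *v a) (X *v b) = linner a b"
proof -
  have "linner (X *v a) (X *v b) = a \<bullet> (transpose X *v (Jmat *v (X *v b)))"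
    unfolding linner_def by (rule inner_matrix_vector)
  also have "\<dots> = a \<bullet> ((transpose X ** Jmat ** X) *v b)"
    by (simp add: matrix_vector_mul_assoc matrix_mul_assoc)
  also have "\<dots> = linner a b" using assms unfolding O1_def linner_def by simp
  finally show ?thesis .
qed

text \<open>The Lorentzian adjoint is a two-sided inverse, so \<open>O\<^sub>1\<close> is also described by \<open>X J X\<^sup>t = J\<close>,
  the form in which the kinematic equation yields it.\<close>
lemma O1_ladj_inverse:
  assumes "X \<in> O1"
  shows "ladj X ** X = mat 1" "X ** ladj X = mat 1"
proof -
  have "ladj X ** X = Jmat ** (transpose X ** Jmat ** X)"
    unfolding ladj_def by (simp add: matrix_mul_assoc)
  also have "\<dots> = mat 1" using assms unfolding O1_def by simp
  finally show left: "ladj X ** X = mat 1" .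
  then show "X ** ladj X = mat 1" using matrix_left_right_inverse by blast
qed

lemma O1_iff_right: "(A::('m::finite) lmat) \<in> O1 \<longleftrightarrow> A ** Jmat ** transpose A = Jmat"
proof
  assume A: "A \<in> O1"
  have "A ** Jmat ** transpose A = (A ** ladj A) ** Jmat"
    unfolding ladj_def by (simp add: matrix_mul_assoc[symmetric])
  then show "A ** Jmat ** transpose A = Jmat" using O1_ladj_inverse(2)[OF A] by simp
next
  assume A: "A ** Jmat ** transpose A = Jmat"
  have "(A ** Jmat) ** (transpose A ** Jmat) = (A ** Jmat ** transpose A) ** Jmat"
    by (simp add: matrix_mul_assoc)
  then have "(transpose A ** Jmat) ** (A ** Jmat) = mat 1"
    using A matrix_left_right_inverse by auto
  then have "((transpose A ** Jmat) ** (A ** Jmat)) ** Jmat = Jmat" by simp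
  then show "A \<in> O1" unfolding O1_def by (simp add: matrix_mul_assoc[symmetric])
qed

lemma matrix_inv_unique:
  fixes A B :: "real^'n^'n"
  assumes "A ** B = mat 1" "B ** A = mat 1"
  shows "matrix_inv A = B"
proof -
  have "A ** matrix_inv A = mat 1 \<and> matrix_inv A ** A = mat 1"
    unfolding matrix_inv_def by (rule someI[of _ B]) (use assms in blast)
  then have "matrix_inv A = matrix_inv A ** (A ** B)" "matrix_inv A ** A = mat 1"
    using assms by simp_all
  then show ?thesis by (simp add: matrix_mul_assoc)
qed

lemma O1_matrix_inv: "X \<in> O1 \<Longrightarrow> matrix_inv X = ladj X"
  using matrix_inv_unique O1_ladj_inverse by blast

lemma O1_matrix_inv_cancel:
  assumes "X \<in> O1"
  shows "matrix_inv X *v (X *v v) = v" "X *v (matrix_inv X *v v) = v"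
  using O1_ladj_inverse[OF assms] O1_matrix_inv[OF assms]
  by (simp_all add: matrix_vector_mul_assoc)

text \<open>\<open>O\<^sub>1\<close> and its identity component \<open>O\<^sup>+\<^sup>+\<^sub>1\<close> are closed under inversion: the adjoint has the same
  time block and the transposed space block.\<close>
lemma O1_ladj:
  assumes "X \<in> O1"
  shows "ladj X \<in> O1"
proof -
  have "transpose (ladj X) ** Jmat ** ladj X = Jmat ** ((X ** Jmat ** transpose X) ** Jmat)"
    unfolding ladj_def by (simp add: matrix_transpose_mul matrix_mul_assoc[symmetric])
  then show ?thesis using O1_iff_right[THEN iffD1, OF assms] unfolding O1_def by simp
qed

lemma time_block_ladj: "time_block (ladj X) = time_block X"
  by (simp add: ladj_def time_block_def Jmat_mult_right Jmat_mult_left transpose_def)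

lemma space_block_ladj: "space_block (ladj X) = transpose (space_block X)"
  by (simp add: ladj_def space_block_def Jmat_mult_right Jmat_mult_left transpose_def vec_eq_iff dJ_def)

lemma O1pp_matrix_inv:
  assumes "X \<in> O1pp"
  shows "matrix_inv X \<in> O1pp"
  using assms O1_ladj[of X] O1_matrix_inv[of X]
  by (simp add: O1pp_def time_block_ladj space_block_ladj)

text \<open>The two blocks of a Lorentz transformation are invertible: \<open>X\<^sub>T\<^sup>2 \<ge> 1\<close>, and \<open>X\<^sub>S\<close> is injective
  because spacelike vectors stay spacelike.  Hence, along a continuous path in \<open>O\<^sub>1\<close>, their signs
  cannot change.\<close>
lemma O1_time_block_nonzero:
  assumes "X \<in> O1"
  shows "time_block X \<noteq> 0"
proof -
  define e :: "'a lvec" where "e = axis None 1"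
  have "linner (X *v e) (X *v e) = -1"
    using O1_linner[OF assms, of e e] by (simp add: linner_expand e_def axis_def)
  then have norm_e: "- ((X *v e) $ None)\<^sup>2 + (\<Sum>k\<in>UNIV. ((X *v e) $ Some k)\<^sup>2) = -1"
    by (simp add: linner_expand power2_eq_square)
  have time: "(X *v e) $ None = time_block X"
    by (simp add: e_def time_block_def matrix_vector_mult_def axis_def
        if_distrib[of "\<lambda>x. _ * x"] cong: if_cong)
  have "(\<Sum>k\<in>UNIV. ((X *v e) $ Some k)\<^sup>2) \<ge> 0" by (simp add: sum_nonneg)
  with norm_e have "(time_block X)\<^sup>2 \<ge> 1" unfolding time by linarith
  then show ?thesis by (cases "time_block X = 0") auto
qed

lemma O1_space_block_det_nonzero:
  assumes "X \<in> O1"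
  shows "det (space_block X) \<noteq> 0"
proof -
  have "v = 0" if v: "space_block X *v v = 0" for v
  proof -
    define w :: "'a lvec" where "w = (\<chi> i. case i of None \<Rightarrow> 0 | Some k \<Rightarrow> v $ k)"
    have "(X *v w) $ Some j = (space_block X *v v) $ j" for j
      by (simp add: w_def matrix_vector_mult_def space_block_def sum_UNIV_option)
    then have "linner (X *v w) (X *v w) = - ((X *v w) $ None)\<^sup>2"
      using v by (simp add: linner_expand power2_eq_square)
    moreover have "linner (X *v w) (X *v w) = v \<bullet> v"
      using O1_linner[OF assms, of w w] by (simp add: linner_expand w_def inner_vec_def)
    ultimately have "v \<bullet> v = 0"
      using zero_le_power2[of "(X *v w) $ None"] inner_ge_zero[of v] by linarith
    then show "v = 0" by simp
  qed
  then have "inj ((*v) (space_block X))"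
    using linear_injective_0[OF matrix_vector_mul_linear] by blast
  then show ?thesis
    using det_nz_iff_inj[OF matrix_vector_mul_linear, of "space_block X"]
    by (simp add: matrix_of_matrix_vector_mul)
qed

subsection \<open>Tangent and normal spaces of the Lorentzian sphere\<close>

lemma nspace_sphere_iff:
  assumes y: "linner y y = 1"
  shows "v \<in> nspace (tspace_sphere y) \<longleftrightarrow> v = linner v y *\<^sub>R y"
proof
  assume v: "v \<in> nspace (tspace_sphere y)"
  have "linner (v - linner v y *\<^sub>R y) z = 0" for z
  proof -
    have "z - linner z y *\<^sub>R y \<in> tspace_sphere y"
      using y by (simp add: tspace_sphere_def linner_diff_left linner_scale_left)
    then have "linner v (z - linner z y *\<^sub>R y) = 0" using v unfolding nspace_def by blast
    then show ?thesis
      using linner_sym[of y z] by (simp add: linner_diff_left linner_diff_right linner_scale_left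
          linner_scale_right)
  qed
  then show "v = linner v y *\<^sub>R y" using linner_nondegenerate[of "v - linner v y *\<^sub>R y"] by simp
next
  assume v: "v = linner v y *\<^sub>R y"
  show "v \<in> nspace (tspace_sphere y)"
    unfolding nspace_def tspace_sphere_def
  proof (intro CollectI ballI)
    fix z assume "z \<in> {v. linner v y = 0}"
    then have "linner y z = 0" using linner_sym[of y z] by simp
    then show "linner v z = 0" by (subst v) (simp add: linner_scale_left)
  qed
qed

lemma tproj_sphere:
  assumes y: "linner y y = 1"
  shows "tproj (tspace_sphere y) v = v - linner v y *\<^sub>R y"
  unfolding tproj_def
proof (rule the_equality)
  have "v - (v - linner v y *\<^sub>R y) \<in> nspace (tspace_sphere y)"
    using y by (simp add: nspace_sphere_iff linner_scale_left)
  moreover have "v - linner v y *\<^sub>R y \<in> tspace_sphere y"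
    using y by (simp add: tspace_sphere_def linner_diff_left linner_scale_left)
  ultimately show "v - linner v y *\<^sub>R y \<in> tspace_sphere y \<and>
      v - (v - linner v y *\<^sub>R y) \<in> nspace (tspace_sphere y)" by blast
next
  fix w assume w: "w \<in> tspace_sphere y \<and> v - w \<in> nspace (tspace_sphere y)"
  then have "v - w = linner (v - w) y *\<^sub>R y" "linner w y = 0"
    using nspace_sphere_iff[OF y] unfolding tspace_sphere_def by auto
  then show "w = v - linner v y *\<^sub>R y" by (simp add: linner_diff_left algebra_simps)
qed

lemma nproj_sphere:
  assumes y: "linner y y = 1"
  shows "nproj (tspace_sphere y) v = linner v y *\<^sub>R y"
  unfolding nproj_def tproj_sphere[OF y] by simp

lemma tproj_sphere_add_normal:
  assumes y: "linner y y = 1"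
  shows "tproj (tspace_sphere y) (v + c *\<^sub>R y) = tproj (tspace_sphere y) v"
  using y by (simp add: tproj_sphere linner_add_left linner_scale_left algebra_simps)

lemma nproj_sphere_add_tangent:
  assumes y: "linner y y = 1" and w: "linner w y = 0"
  shows "nproj (tspace_sphere y) (v + w) = nproj (tspace_sphere y) v"
  using y w by (simp add: nproj_sphere linner_add_left)

lemma O1_image_tspace_sphere:
  assumes X: "X \<in> O1"
  shows "(\<lambda>v. X *v v) ` tspace_sphere y = tspace_sphere (X *v y)"
proof
  show "(\<lambda>v. X *v v) ` tspace_sphere y \<subseteq> tspace_sphere (X *v y)"
    using O1_linner[OF X] unfolding tspace_sphere_def by auto
next
  show "tspace_sphere (X *v y) \<subseteq> (\<lambda>v. X *v v) ` tspace_sphere y"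
  proof
    fix w assume "w \<in> tspace_sphere (X *v y)"
    then have "matrix_inv X *v w \<in> tspace_sphere y"
      using O1_linner[OF X, of "matrix_inv X *v w" y] O1_matrix_inv_cancel(2)[OF X]
      unfolding tspace_sphere_def by simp
    moreover have "w = X *v (matrix_inv X *v w)" using O1_matrix_inv_cancel(2)[OF X] by simp
    ultimately show "w \<in> (\<lambda>v. X *v v) ` tspace_sphere y" by blast
  qed
qed

lemma O1_tproj_sphere:
  assumes X: "X \<in> O1" and y: "linner y y = 1"
  shows "X *v tproj (tspace_sphere y) v = tproj (tspace_sphere (X *v y)) (X *v v)"
proof -
  have "linner (X *v y) (X *v y) = 1" using O1_linner[OF X] y by simp
  then show ?thesis
    using O1_linner[OF X, of v y] y
    by (simp add: tproj_sphere matrix_vector_mult_diff_distrib matrix_vector_mult_scaleR)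
qed

lemma O1_nproj_sphere:
  assumes X: "X \<in> O1" and y: "linner y y = 1"
  shows "X *v nproj (tspace_sphere y) v = nproj (tspace_sphere (X *v y)) (X *v v)"
  using O1_tproj_sphere[OF X y, of v]
  by (simp add: nproj_def matrix_vector_mult_diff_distrib)

text \<open>The bivector \<open>u \<and> x = u x\<^sup>t - x u\<^sup>t\<close>: \<open>(u \<and> x) J\<close> generates the Lorentz rotation in the
  plane of \<open>u\<close> and \<open>x\<close>, as appears in the kinematic equation for \<open>R\<close>.\<close>
definition wedge :: "('m::finite) lvec \<Rightarrow> 'm lvec \<Rightarrow> 'm lmat" where
  "wedge u x = outer u x - outer x u"

lemma transpose_wedge: "transpose (wedge u x) = - wedge u x"
  by (simp add: wedge_def outer_def transpose_def vec_eq_iff)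

lemma wedge_Jmat_mv: "(wedge u x ** Jmat) *v w = linner x w *\<^sub>R u - linner u w *\<^sub>R x"
  by (simp add: wedge_def matrix_vector_mul_assoc[symmetric] matrix_vector_mult_diff_rdistrib
      outer_mv linner_def)

lemma bounded_bilinear_matrix_mult: "bounded_bilinear (\<lambda>(A::real^'n^'m) (B::real^'p^'n). A ** B)"
proof -
  have "bilinear (\<lambda>(A::real^'n^'m) (B::real^'p^'n). A ** B)"
    unfolding bilinear_def
  proof (intro conjI allI)
    fix A :: "real^'n^'m"
    show "linear (\<lambda>B::real^'p^'n. A ** B)"
      by (rule linearI) (simp_all add: matrix_add_ldistrib matrix_scalar_ac scalar_matrix_assoc[symmetric])
  next
    fix B :: "real^'p^'n"
    show "linear (\<lambda>A::real^'n^'m. A ** B)"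
    proof (rule linearI)
      show "(x + y) ** B = x ** B + y ** B" for x y :: "real^'n^'m"
        by (simp add: matrix_matrix_mult_def vec_eq_iff sum.distrib distrib_right)
      show "(c *\<^sub>R x) ** B = c *\<^sub>R (x ** B)" for c and x :: "real^'n^'m"
        by (simp add: scalar_matrix_assoc)
    qed
  qed
  then show ?thesis using bilinear_conv_bounded_bilinear by blast
qed

lemma bounded_bilinear_matrix_vector_mult: "bounded_bilinear (\<lambda>(A::real^'n^'m) (v::real^'n). A *v v)"
proof -
  have "bilinear (\<lambda>(A::real^'n^'m) (v::real^'n). A *v v)"
    unfolding bilinear_def
  proof (intro conjI allI)
    fix A :: "real^'n^'m"
    show "linear (\<lambda>v::real^'n. A *v v)" by (rule matrix_vector_mul_linear)
  next
    fix v :: "real^'n"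
    show "linear (\<lambda>A::real^'n^'m. A *v v)"
      by (rule linearI) (simp_all add: matrix_vector_mult_add_rdistrib scaleR_matrix_vector_assoc)
  qed
  then show ?thesis using bilinear_conv_bounded_bilinear by blast
qed

lemma bounded_linear_transpose: "bounded_linear (transpose :: real^'n^'m \<Rightarrow> real^'m^'n)"
proof -
  have "linear (transpose :: real^'n^'m \<Rightarrow> real^'m^'n)"
    by (rule linearI) (simp_all add: transpose_def vec_eq_iff)
  then show ?thesis using linear_conv_bounded_linear by blast
qed

lemma bounded_linear_ladj: "bounded_linear (ladj :: ('m::finite) lmat \<Rightarrow> 'm lmat)"
  unfolding ladj_def
  by (rule bounded_linear_compose[OF bounded_bilinear.bounded_linear_left[OF bounded_bilinear_matrix_mult]
        bounded_linear_compose[OF bounded_bilinear.bounded_linear_right[OF bounded_bilinear_matrix_mult]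
          bounded_linear_transpose]])

lemma matrix_mult_uminus_left: "(- A) ** (B::real^'p^'n) = - ((A::real^'n^'m) ** B)"
  by (simp add: matrix_matrix_mult_def vec_eq_iff sum_negf)

lemma matrix_mult_uminus_right: "(A::real^'n^'m) ** (- B) = - (A ** (B::real^'p^'n))"
  by (simp add: matrix_matrix_mult_def vec_eq_iff sum_negf)

lemma matrix_vector_mult_uminus: "(- A) *v x = - ((A::real^'n^'m) *v x)"
  by (simp add: matrix_vector_mult_def vec_eq_iff sum_negf)

lemma continuous_on_det:
  fixes f :: "real \<Rightarrow> real^'n^'n"
  assumes "continuous_on S f"
  shows "continuous_on S (\<lambda>t. det (f t))"
  unfolding det_def by (intro continuous_intros assms)

lemma O1_inverse_derivative:
  fixes R :: "real \<Rightarrow> ('m::finite) lmat" and F :: "real \<Rightarrow> 'm lvec"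
  assumes ab: "a < b" and t: "t \<in> {a..b}" and O1: "\<forall>r\<in>{a..b}. R r \<in> O1"
    and skew: "transpose W = - W"
    and dR: "(R has_vector_derivative R t ** W ** Jmat) (at t within {a..b})"
    and dF: "(F has_vector_derivative F') (at t within {a..b})"
    and dV: "((\<lambda>r. matrix_inv (R r) *v F r) has_vector_derivative V) (at t within {a..b})"
  shows "V = matrix_inv (R t) *v F' - (W ** Jmat) *v (matrix_inv (R t) *v F t)"
proof -
  have d_ladj: "((\<lambda>r. ladj (R r)) has_vector_derivative ladj (R t ** W ** Jmat)) (at t within {a..b})"
    using bounded_linear.has_vector_derivative[OF bounded_linear_ladj dR] .
  have "((\<lambda>r. ladj (R r) *v F r) has_vector_derivative
      ladj (R t) *v F' + ladj (R t ** W ** Jmat) *v F t) (at t within {a..b})"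
    using bounded_bilinear.has_vector_derivative[OF bounded_bilinear_matrix_vector_mult d_ladj dF]
    by simp
  then have "((\<lambda>r. matrix_inv (R r) *v F r) has_vector_derivative
      ladj (R t) *v F' + ladj (R t ** W ** Jmat) *v F t) (at t within {a..b})"
    by (rule has_vector_derivative_transform_within[OF _ zero_less_one t])
      (metis O1 O1_matrix_inv atLeastAtMost_iff)
  then have "V = ladj (R t) *v F' + ladj (R t ** W ** Jmat) *v F t"
    using vector_derivative_unique_within_closed_interval[of a b t] ab t dV by simp
  moreover have "ladj (R t ** W ** Jmat) = - ((W ** Jmat) ** ladj (R t))"
    unfolding ladj_def
    by (simp add: matrix_transpose_mul matrix_mul_assoc[symmetric] skew matrix_mult_uminus_left matrix_mult_uminus_right)
  ultimately show ?thesis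
    using O1_matrix_inv[of "R t"] O1 t
    by (simp add: matrix_vector_mul_assoc[symmetric] matrix_vector_mult_uminus)
qed

subsection \<open>The kinematic equation keeps \<open>R\<close> in \<open>O\<^sup>+\<^sup>+\<^sub>1\<close>\<close>

text \<open>If \<open>R' = R W J\<close> with \<open>W\<close> skew, then \<open>(R J R\<^sup>t)' = R (W\<^sup>t + W) R\<^sup>t = 0\<close> almost everywhere,
  so by absolute continuity \<open>R J R\<^sup>t\<close> keeps its initial value \<open>J\<close>.\<close>
lemma skew_kinematics_O1:
  fixes R W :: "real \<Rightarrow> ('m::finite) lmat"
  assumes R_ac: "abs_cont_on R 0 \<tau>" and R0: "R 0 = mat 1"
    and skew: "\<And>t. transpose (W t) = - W t"
    and dR: "AE t in lebesgue. t \<in> {0..\<tau>} \<longrightarrow>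
               (R has_vector_derivative R t ** W t ** Jmat) (at t within {0..\<tau>})"
    and t: "t \<in> {0..\<tau>}"
  shows "R t \<in> O1"
proof -
  have mult_J: "bounded_linear (\<lambda>A::'m lmat. A ** Jmat)"
    by (rule bounded_bilinear.bounded_linear_left[OF bounded_bilinear_matrix_mult])
  define H where "H r = (R r ** Jmat) ** transpose (R r)" for r
  have H_ac: "abs_cont_on H 0 \<tau>"
    unfolding H_def using ac_bilinear[OF bounded_bilinear_matrix_mult ac_linear[OF mult_J R_ac]
        ac_linear[OF bounded_linear_transpose R_ac]] by simp
  have "AE r in lebesgue. r \<in> {0..\<tau>} \<longrightarrow> (H has_vector_derivative 0) (at r within {0..\<tau>})"
    using dR
  proof eventually_elim
    case (elim r)
    show ?case
    proof
      assume "r \<in> {0..\<tau>}"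
      with elim have d: "(R has_vector_derivative R r ** W r ** Jmat) (at r within {0..\<tau>})" ..
      have "(H has_vector_derivative (R r ** Jmat) ** transpose (R r ** W r ** Jmat) +
          (R r ** W r ** Jmat) ** Jmat ** transpose (R r)) (at r within {0..\<tau>})"
        unfolding H_def
        using bounded_bilinear.has_vector_derivative[OF bounded_bilinear_matrix_mult
            bounded_linear.has_vector_derivative[OF mult_J d]
            bounded_linear.has_vector_derivative[OF bounded_linear_transpose d]]
        by simp
      moreover have "(R r ** Jmat) ** transpose (R r ** W r ** Jmat) +
          (R r ** W r ** Jmat) ** Jmat ** transpose (R r) = 0"
        by (simp add: matrix_transpose_mul matrix_mul_assoc[symmetric] skew
            matrix_mult_uminus_left matrix_mult_uminus_right)
      ultimately show "(H has_vector_derivative 0) (at r within {0..\<tau>})" by simp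
    qed
  qed
  then have "H t = H 0" by (rule ac_AE_zero_derivative_const[OF H_ac _ t])
  then have "R t ** Jmat ** transpose (R t) = Jmat" unfolding H_def R0 by simp
  then show ?thesis unfolding O1_iff_right .
qed

lemma continuous_nonvanishing_pos:
  fixes g :: "real \<Rightarrow> real"
  assumes c: "continuous_on {0..\<tau>} g" and nz: "\<And>t. t \<in> {0..\<tau>} \<Longrightarrow> g t \<noteq> 0"
    and g0: "g 0 > 0" and t: "t \<in> {0..\<tau>}"
  shows "g t > 0"
proof (rule ccontr)
  assume "\<not> g t > 0"
  moreover have "continuous_on {0..t} g" using continuous_on_subset[OF c] t by auto
  ultimately obtain x where "0 \<le> x" "x \<le> t" "g x = 0" using IVT2'[of g t 0 0] g0 t by auto
  then show False using nz t by auto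
qed

text \<open>A continuous curve in \<open>O\<^sub>1\<close> through the identity stays in the identity component
  \<open>O\<^sup>+\<^sup>+\<^sub>1\<close>: neither the time block nor the determinant of the space block can change sign.\<close>
lemma O1_curve_in_O1pp:
  fixes R :: "real \<Rightarrow> ('m::finite) lmat"
  assumes R_cont: "continuous_on {0..\<tau>} R" and R_O1: "\<forall>t\<in>{0..\<tau>}. R t \<in> O1"
    and R0: "R 0 = mat 1" and t: "t \<in> {0..\<tau>}"
  shows "R t \<in> O1pp"
proof -
  have "time_block (R t) > 0"
  proof (rule continuous_nonvanishing_pos[where g = "\<lambda>t. time_block (R t)", OF _ _ _ t])
    show "continuous_on {0..\<tau>} (\<lambda>t. time_block (R t))"
      unfolding time_block_def by (intro continuous_intros R_cont)
    show "time_block (R r) \<noteq> 0" if "r \<in> {0..\<tau>}" for r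
      using O1_time_block_nonzero R_O1 that by blast
    show "time_block (R 0) > 0" by (simp add: R0 time_block_def mat_def)
  qed
  moreover have "det (space_block (R t)) > 0"
  proof (rule continuous_nonvanishing_pos[where g = "\<lambda>t. det (space_block (R t))", OF _ _ _ t])
    show "continuous_on {0..\<tau>} (\<lambda>t. det (space_block (R t)))"
      unfolding space_block_def by (intro continuous_on_det continuous_intros R_cont)
    show "det (space_block (R r)) \<noteq> 0" if "r \<in> {0..\<tau>}" for r
      using O1_space_block_det_nonzero R_O1 that by blast
    have "space_block (R 0) = mat 1" by (simp add: R0 space_block_def mat_def vec_eq_iff)
    then show "det (space_block (R 0)) > 0" by simp
  qed
  ultimately show ?thesis using R_O1 t unfolding O1pp_def by simp
qed

subsection \<open>Rolling without slipping or twisting\<close>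

definition rolling_at ::
  "('m::finite) lmat set \<Rightarrow> ('m lvec \<Rightarrow> 'm lvec set) \<Rightarrow> ('m lvec \<Rightarrow> 'm lvec) \<Rightarrow>
   'm lvec set \<Rightarrow> ('m lvec \<Rightarrow> 'm lvec set) \<Rightarrow> ('m lvec \<Rightarrow> 'm lvec) \<Rightarrow>
   real \<Rightarrow> (real \<Rightarrow> 'm lvec) \<Rightarrow> (real \<Rightarrow> 'm lvec) \<Rightarrow> (real \<Rightarrow> 'm lmat) \<Rightarrow> real \<Rightarrow> bool" where
  "rolling_at G TM NM Mh TMh NMh \<tau> x s A t \<longleftrightarrow>
    (let xh = (\<lambda>t. s t + A t *v x t) in
        xh t \<in> Mh \<and>
        (\<lambda>v. A t *v v) ` TM (x t) = TMh (xh t) \<and>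
        preserves_G_orient G (TM (x t)) (NM (x t)) (NMh (xh t)) (A t) \<and>
        (\<exists>a b. (x has_vector_derivative a) (at t within {0..\<tau>}) \<and>
               (xh has_vector_derivative b) (at t within {0..\<tau>}) \<and>
               b = A t *v a) \<and>
        (\<forall>Z Z' W'. (\<forall>r\<in>{0..\<tau>}. Z r \<in> TM (x r)) \<and>
              (Z has_vector_derivative Z') (at t within {0..\<tau>}) \<and>
              ((\<lambda>r. A r *v Z r) has_vector_derivative W') (at t within {0..\<tau>})
              \<longrightarrow> A t *v tproj (TM (x t)) Z' = tproj (TMh (xh t)) W') \<and>
        (\<forall>\<Psi> \<Psi>' W'. (\<forall>r\<in>{0..\<tau>}. \<Psi> r \<in> nspace (TM (x r))) \<and>
              (\<Psi> has_vector_derivative \<Psi>') (at t within {0..\<tau>}) \<and>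
              ((\<lambda>r. A r *v \<Psi> r) has_vector_derivative W') (at t within {0..\<tau>})
              \<longrightarrow> A t *v nproj (TM (x t)) \<Psi>' = nproj (TMh (xh t)) W'))"

lemma rolling_iff_rolling_at:
  "rolling G M TM NM Mh TMh NMh \<tau> x s A \<longleftrightarrow>
     abs_cont_on (\<lambda>t. (x t, s t, A t)) 0 \<tau> \<and>
     (\<forall>t\<in>{0..\<tau>}. x t \<in> M \<and> A t \<in> G) \<and>
     (AE t in lebesgue. t \<in> {0..\<tau>} \<longrightarrow> rolling_at G TM NM Mh TMh NMh \<tau> x s A t)"
  unfolding rolling_def rolling_at_def Let_def ..

text \<open>No twisting, tangential part: if \<open>X\<close> is a Lorentz transformation moving \<open>y\<close> to \<open>x\<^sub>0\<close> and
  \<open>W' = X Z' - (u \<and> x\<^sub>0) J X Z\<close> for a tangent vector \<open>Z\<close> at \<open>y\<close>, then \<open>W'\<close> and \<open>X Z'\<close> differ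
  by a multiple of \<open>x\<^sub>0\<close>, so their tangential parts agree.\<close>
lemma no_twist_tangential:
  fixes X :: "('m::finite) lmat"
  assumes x0: "linner x0 x0 = 1" and X: "X \<in> O1" and y: "X *v y = x0"
    and Z: "linner Z y = 0"
    and W': "W' = X *v Z' - (wedge u x0 ** Jmat) *v (X *v Z)"
  shows "X *v tproj (tspace_sphere y) Z' = tproj (tspace_sphere x0) W'"
proof -
  have yy: "linner y y = 1" using O1_linner[OF X, of y y] x0 y by simp
  have "linner x0 (X *v Z) = 0"
    using O1_linner[OF X, of y Z] y Z linner_sym[of Z y] by simp
  then have "W' = X *v Z' + linner u (X *v Z) *\<^sub>R x0" using W' by (simp add: wedge_Jmat_mv)
  then have "tproj (tspace_sphere x0) W' = tproj (tspace_sphere x0) (X *v Z')"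
    using tproj_sphere_add_normal[OF x0] by simp
  also have "\<dots> = X *v tproj (tspace_sphere y) Z'" using O1_tproj_sphere[OF X yy] y by simp
  finally show ?thesis by simp
qed

text \<open>No twisting, normal part: for a normal vector \<open>\<Psi> = c y\<close>, \<open>W'\<close> and \<open>X \<Psi>'\<close> differ by
  \<open>c u\<close>, which is tangent at \<open>x\<^sub>0\<close>, so their normal parts agree.\<close>
lemma no_twist_normal:
  fixes X :: "('m::finite) lmat"
  assumes x0: "linner x0 x0 = 1" and X: "X \<in> O1" and y: "X *v y = x0"
    and u: "linner u x0 = 0"
    and \<Psi>: "\<Psi> \<in> nspace (tspace_sphere y)"
    and W': "W' = X *v \<Psi>' - (wedge u x0 ** Jmat) *v (X *v \<Psi>)"
  shows "X *v nproj (tspace_sphere y) \<Psi>' = nproj (tspace_sphere x0) W'"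
proof -
  have yy: "linner y y = 1" using O1_linner[OF X, of y y] x0 y by simp
  define c where "c = linner \<Psi> y"
  have "\<Psi> = c *\<^sub>R y" using nspace_sphere_iff[OF yy] \<Psi> unfolding c_def by blast
  then have "X *v \<Psi> = c *\<^sub>R x0" using y by (simp add: matrix_vector_mult_scaleR)
  then have W'_eq: "W' = X *v \<Psi>' + (- c) *\<^sub>R u"
    using W' x0 u by (simp add: wedge_Jmat_mv linner_scale_right)
  have "linner ((- c) *\<^sub>R u) x0 = 0" using u linner_scale_left by (metis mult_zero_right)
  then have "nproj (tspace_sphere x0) W' = nproj (tspace_sphere x0) (X *v \<Psi>')"
    unfolding W'_eq by (rule nproj_sphere_add_tangent[OF x0])
  also have "\<dots> = X *v nproj (tspace_sphere y) \<Psi>'" using O1_nproj_sphere[OF X yy] y by simp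
  finally show ?thesis by simp
qed

text \<open>No slipping: the velocity of the contact point \<open>R x\<^sub>0\<close>, carried back by \<open>R\<^sup>-\<^sup>1\<close>, is
  \<open>(u \<and> x\<^sub>0) J x\<^sub>0 = u\<close>, the velocity of the development \<open>s + x\<^sub>0\<close>.\<close>
lemma development_no_slip:
  fixes x0 :: "('m::finite) lvec" and R :: "real \<Rightarrow> 'm lmat"
  assumes x0: "linner x0 x0 = 1" and t: "t \<in> {0..\<tau>}" and R_O1: "\<forall>r\<in>{0..\<tau>}. R r \<in> O1"
    and u_perp: "linner u x0 = 0"
    and ds: "(s has_vector_derivative u) (at t within {0..\<tau>})"
    and dR: "(R has_vector_derivative R t ** wedge u x0 ** Jmat) (at t within {0..\<tau>})"
  shows "\<exists>a b. ((\<lambda>t. R t *v x0) has_vector_derivative a) (at t within {0..\<tau>}) \<and>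
    ((\<lambda>t. s t + matrix_inv (R t) *v (R t *v x0)) has_vector_derivative b) (at t within {0..\<tau>}) \<and>
    b = matrix_inv (R t) *v a"
proof (intro exI conjI)
  have cancel: "matrix_inv (R r) *v (R r *v v) = v" if "r \<in> {0..\<tau>}" for r v
    using O1_matrix_inv_cancel(1) R_O1 that by blast
  show "((\<lambda>t. R t *v x0) has_vector_derivative (R t ** wedge u x0 ** Jmat) *v x0)
      (at t within {0..\<tau>})"
    using bounded_linear.has_vector_derivative[OF bounded_bilinear.bounded_linear_left[OF
        bounded_bilinear_matrix_vector_mult] dR] by simp
  have "((\<lambda>t. s t + x0) has_vector_derivative u) (at t within {0..\<tau>})"
    using has_vector_derivative_add[OF ds has_vector_derivative_const[of x0]] by simp
  then show "((\<lambda>t. s t + matrix_inv (R t) *v (R t *v x0)) has_vector_derivative u)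
      (at t within {0..\<tau>})"
    by (rule has_vector_derivative_transform_within[OF _ zero_less_one t]) (simp add: cancel)
  have "matrix_inv (R t) *v ((R t ** wedge u x0 ** Jmat) *v x0) = (wedge u x0 ** Jmat) *v x0"
    using cancel[OF t] by (simp add: matrix_vector_mul_assoc[symmetric])
  then show "u = matrix_inv (R t) *v ((R t ** wedge u x0 ** Jmat) *v x0)"
    using x0 u_perp by (simp add: wedge_Jmat_mv)
qed

text \<open>At every time where the kinematic equations hold, the curve \<open>(R x\<^sub>0, (s, R\<^sup>-\<^sup>1))\<close> satisfies
  the rolling conditions for \<open>S\<^sup>m\<^sub>1\<close> on its affine tangent space at \<open>x\<^sub>0\<close>: \<open>X = R(t)\<^sup>-\<^sup>1\<close> lies in
  \<open>O\<^sup>+\<^sup>+\<^sub>1 \<subseteq> G\<close> and maps \<open>R(t) x\<^sub>0\<close> to \<open>x\<^sub>0\<close>, which gives (i)--(iii); (iv)--(vi) are the lemmas above.\<close>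
lemma development_rolling_at:
  fixes x0 :: "('m::finite) lvec" and R :: "real \<Rightarrow> 'm lmat"
  assumes tau: "0 < \<tau>" and x0: "linner x0 x0 = 1"
    and R_pp: "\<forall>r\<in>{0..\<tau>}. R r \<in> O1pp" and G: "O1pp \<subseteq> G" and t: "t \<in> {0..\<tau>}"
    and u_perp: "linner (u t) x0 = 0" and s_perp: "linner (s t) x0 = 0"
    and ds: "(s has_vector_derivative u t) (at t within {0..\<tau>})"
    and dR: "(R has_vector_derivative R t ** wedge (u t) x0 ** Jmat) (at t within {0..\<tau>})"
  shows "rolling_at G tspace_sphere (\<lambda>y. y) (aff_tspace x0) (\<lambda>_. tspace_sphere x0) (\<lambda>_. x0)
           \<tau> (\<lambda>t. R t *v x0) s (\<lambda>t. matrix_inv (R t)) t"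
proof -
  have R_O1: "\<forall>r\<in>{0..\<tau>}. R r \<in> O1" using R_pp unfolding O1pp_def by blast
  define X where "X = matrix_inv (R t)"
  have X_pp: "X \<in> O1pp" unfolding X_def using O1pp_matrix_inv R_pp t by blast
  then have X_O1: "X \<in> O1" unfolding O1pp_def by blast
  have Xx0: "X *v (R t *v x0) = x0" unfolding X_def using O1_matrix_inv_cancel(1) R_O1 t by blast
  have inv_derivative: "W' = X *v F' - (wedge (u t) x0 ** Jmat) *v (X *v F t)"
    if "(F has_vector_derivative F') (at t within {0..\<tau>})"
      and "((\<lambda>r. matrix_inv (R r) *v F r) has_vector_derivative W') (at t within {0..\<tau>})" for F F' W'
    unfolding X_def using O1_inverse_derivative[OF tau t R_O1 transpose_wedge dR that] .
  show ?thesis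
    unfolding rolling_at_def Let_def X_def[symmetric] Xx0
  proof (intro conjI allI impI)
    show "s t + x0 \<in> aff_tspace x0"
      using s_perp unfolding aff_tspace_def tspace_sphere_def by (auto simp: add.commute)
    show "(\<lambda>v. X *v v) ` tspace_sphere (R t *v x0) = tspace_sphere x0"
      using O1_image_tspace_sphere[OF X_O1] Xx0 by simp
    show "preserves_G_orient G (tspace_sphere (R t *v x0)) (R t *v x0) x0 X"
      unfolding preserves_G_orient_def using X_pp G Xx0 by blast
    show "\<exists>a b. ((\<lambda>t. R t *v x0) has_vector_derivative a) (at t within {0..\<tau>}) \<and>
        ((\<lambda>t. s t + matrix_inv (R t) *v (R t *v x0)) has_vector_derivative b) (at t within {0..\<tau>}) \<and>
        b = X *v a"
      unfolding X_def by (rule development_no_slip[OF x0 t R_O1 u_perp ds dR])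
  next
    fix Z Z' W'
    assume "(\<forall>r\<in>{0..\<tau>}. Z r \<in> tspace_sphere (R r *v x0)) \<and>
        (Z has_vector_derivative Z') (at t within {0..\<tau>}) \<and>
        ((\<lambda>r. matrix_inv (R r) *v Z r) has_vector_derivative W') (at t within {0..\<tau>})"
    then show "X *v tproj (tspace_sphere (R t *v x0)) Z' = tproj (tspace_sphere x0) W'"
      using no_twist_tangential[OF x0 X_O1 Xx0] inv_derivative t unfolding tspace_sphere_def by blast
  next
    fix \<Psi> \<Psi>' W'
    assume "(\<forall>r\<in>{0..\<tau>}. \<Psi> r \<in> nspace (tspace_sphere (R r *v x0))) \<and>
        (\<Psi> has_vector_derivative \<Psi>') (at t within {0..\<tau>}) \<and>
        ((\<lambda>r. matrix_inv (R r) *v \<Psi> r) has_vector_derivative W') (at t within {0..\<tau>})"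
    then show "X *v nproj (tspace_sphere (R t *v x0)) \<Psi>' = nproj (tspace_sphere x0) W'"
      using no_twist_normal[OF x0 X_O1 Xx0 u_perp] inv_derivative t by blast
  qed
qed

text \<open>The development \<open>s\<close> stays in the tangent space at \<open>x\<^sub>0\<close>, since \<open>\<langle>s, x\<^sub>0\<rangle>' = \<langle>u, x\<^sub>0\<rangle> = 0\<close>.\<close>
lemma development_tangent:
  assumes s_ac: "abs_cont_on s 0 \<tau>" and s0: "s 0 = 0"
    and u_perp: "\<forall>t\<in>{0..\<tau>}. linner (u t) x0 = 0"
    and ds: "AE t in lebesgue. t \<in> {0..\<tau>} \<longrightarrow> (s has_vector_derivative u t) (at t within {0..\<tau>})"
    and t: "t \<in> {0..\<tau>}"
  shows "linner (s t) x0 = 0"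
proof -
  have "AE r in lebesgue. r \<in> {0..\<tau>} \<longrightarrow>
      ((\<lambda>t. linner (s t) x0) has_vector_derivative 0) (at r within {0..\<tau>})"
    using ds
  proof eventually_elim
    case (elim r)
    show ?case
    proof
      assume r: "r \<in> {0..\<tau>}"
      then have "((\<lambda>t. linner (s t) x0) has_vector_derivative linner (u r) x0) (at r within {0..\<tau>})"
        using bounded_linear.has_vector_derivative[OF bounded_linear_linner_left] elim by blast
      then show "((\<lambda>t. linner (s t) x0) has_vector_derivative 0) (at r within {0..\<tau>})"
        using u_perp r by simp
    qed
  qed
  from ac_AE_zero_derivative_const[OF ac_linear[OF bounded_linear_linner_left s_ac] this t]
  show ?thesis using s0 by (simp add: linner_def)
qed

lemma development_rolling:
  fixes x0 :: "('m::finite) lvec" and R :: "real \<Rightarrow> 'm lmat"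
  assumes tau: "0 < \<tau>" and x0: "linner x0 x0 = 1"
    and s_ac: "abs_cont_on s 0 \<tau>" and R_ac: "abs_cont_on R 0 \<tau>"
    and R_pp: "\<forall>t\<in>{0..\<tau>}. R t \<in> O1pp" and G: "O1pp \<subseteq> G"
    and u_perp: "\<forall>t\<in>{0..\<tau>}. linner (u t) x0 = 0" and s_perp: "\<forall>t\<in>{0..\<tau>}. linner (s t) x0 = 0"
    and ode: "AE t in lebesgue. t \<in> {0..\<tau>} \<longrightarrow>
               (s has_vector_derivative u t) (at t within {0..\<tau>}) \<and>
               (R has_vector_derivative R t ** wedge (u t) x0 ** Jmat) (at t within {0..\<tau>})"
  shows "rolling G lsphere tspace_sphere (\<lambda>y. y) (aff_tspace x0) (\<lambda>_. tspace_sphere x0) (\<lambda>_. x0)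
           \<tau> (\<lambda>t. R t *v x0) s (\<lambda>t. matrix_inv (R t))"
  unfolding rolling_iff_rolling_at
proof (intro conjI)
  have R_O1: "\<forall>t\<in>{0..\<tau>}. R t \<in> O1" using R_pp unfolding O1pp_def by blast
  have "abs_cont_on (\<lambda>t. (R t *v x0, s t, ladj (R t))) 0 \<tau>"
    by (intro ac_pair s_ac ac_linear[OF bounded_linear_ladj R_ac] ac_linear[OF _ R_ac]
        bounded_bilinear.bounded_linear_left[OF bounded_bilinear_matrix_vector_mult])
  then show "abs_cont_on (\<lambda>t. (R t *v x0, s t, matrix_inv (R t))) 0 \<tau>"
    by (rule ac_cong) (metis O1_matrix_inv R_O1)
  show "\<forall>t\<in>{0..\<tau>}. R t *v x0 \<in> lsphere \<and> matrix_inv (R t) \<in> G"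
  proof
    fix t assume t: "t \<in> {0..\<tau>}"
    show "R t *v x0 \<in> lsphere \<and> matrix_inv (R t) \<in> G"
      using O1_linner[of "R t" x0 x0] R_O1 t x0 O1pp_matrix_inv[of "R t"] R_pp G
      unfolding lsphere_def by auto
  qed
  show "AE t in lebesgue. t \<in> {0..\<tau>} \<longrightarrow> rolling_at G tspace_sphere (\<lambda>y. y) (aff_tspace x0)
      (\<lambda>_. tspace_sphere x0) (\<lambda>_. x0) \<tau> (\<lambda>t. R t *v x0) s (\<lambda>t. matrix_inv (R t)) t"
    using ode by eventually_elim (use development_rolling_at[OF tau x0 R_pp G] u_perp s_perp in blast)
qed

theorem mainTheorem2:
  fixes x0 :: "('m::finite) lvec"
    and \<tau> :: real
    and u s :: "real \<Rightarrow> 'm lvec"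
    and R :: "real \<Rightarrow> 'm lmat"
  assumes tau: "0 < \<tau>"
    and x0: "x0 \<in> lsphere"
    and u_ac: "abs_cont_on u 0 \<tau>"
    and u_perp: "\<forall>t\<in>{0..\<tau>}. linner (u t) x0 = 0"
    and sR_ac: "abs_cont_on (\<lambda>t. (s t, R t)) 0 \<tau>"
    and R_GL: "\<forall>t\<in>{0..\<tau>}. invertible (R t)"
    and ode: "AE t in lebesgue. t \<in> {0..\<tau>} \<longrightarrow>
               (s has_vector_derivative u t) (at t within {0..\<tau>}) \<and>
               (R has_vector_derivative
                  (R t ** (outer (u t) x0 - outer x0 (u t)) ** Jmat)) (at t within {0..\<tau>})"
    and init: "s 0 = 0" "R 0 = mat 1"
  shows "(\<forall>t\<in>{0..\<tau>}. R t \<in> O1pp) \<and>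
         (\<forall>G\<in>G1_choices.
            rolling G lsphere tspace_sphere (\<lambda>y. y)
                      (aff_tspace x0) (\<lambda>_. tspace_sphere x0) (\<lambda>_. x0)
                      \<tau> (\<lambda>t. R t *v x0) s (\<lambda>t. matrix_inv (R t))) \<and>
         (\<forall>t\<in>{0..\<tau>}. s t + matrix_inv (R t) *v (R t *v x0) = s t + x0)"
proof -
  have x0_unit: "linner x0 x0 = 1" using x0 unfolding lsphere_def by simp
  have ode': "AE t in lebesgue. t \<in> {0..\<tau>} \<longrightarrow>
      (s has_vector_derivative u t) (at t within {0..\<tau>}) \<and>
      (R has_vector_derivative R t ** wedge (u t) x0 ** Jmat) (at t within {0..\<tau>})"
    using ode unfolding wedge_def .
  have s_ac: "abs_cont_on s 0 \<tau>" using ac_linear[OF bounded_linear_fst sR_ac] by simp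
  have R_ac: "abs_cont_on R 0 \<tau>" using ac_linear[OF bounded_linear_snd sR_ac] by simp
  have "AE t in lebesgue. t \<in> {0..\<tau>} \<longrightarrow>
      (R has_vector_derivative R t ** wedge (u t) x0 ** Jmat) (at t within {0..\<tau>})"
    using ode' by eventually_elim blast
  then have R_O1: "\<forall>t\<in>{0..\<tau>}. R t \<in> O1"
    using skew_kinematics_O1[where W = "\<lambda>t. wedge (u t) x0", OF R_ac init(2) transpose_wedge] by blast
  have R_pp: "\<forall>t\<in>{0..\<tau>}. R t \<in> O1pp"
    using O1_curve_in_O1pp[OF ac_continuous[OF R_ac] R_O1 init(2)] by blast
  have "AE t in lebesgue. t \<in> {0..\<tau>} \<longrightarrow> (s has_vector_derivative u t) (at t within {0..\<tau>})"
    using ode' by eventually_elim blast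
  then have s_perp: "\<forall>t\<in>{0..\<tau>}. linner (s t) x0 = 0"
    using development_tangent[OF s_ac init(1) u_perp] by blast
  have "O1pp \<subseteq> G" if "G \<in> G1_choices" for G using that unfolding G1_choices_def by auto
  then have "\<forall>G\<in>G1_choices. rolling G lsphere tspace_sphere (\<lambda>y. y) (aff_tspace x0)
      (\<lambda>_. tspace_sphere x0) (\<lambda>_. x0) \<tau> (\<lambda>t. R t *v x0) s (\<lambda>t. matrix_inv (R t))"
    using development_rolling[OF tau x0_unit s_ac R_ac R_pp _ u_perp s_perp ode'] by blast
  moreover have "\<forall>t\<in>{0..\<tau>}. matrix_inv (R t) *v (R t *v x0) = x0"
    using O1_matrix_inv_cancel(1) R_O1 by blast
  ultimately show ?thesis using R_pp by simp
qed

end
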